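(* Let $n=p$ be prime, let $v\in\mathbb{R}^p$ have pairwise distinct coordinates, let $C$ be the elementary symmetric curve associated to $v$, and let $C_i$ be any irreducible component of $C$. Then the stabilizer $\mathrm{stab}(C_i)$ of $C_i$ under the $S_p$-action on the set of irreducible components of $C$ contains a $p$-cycle.
   Context: For $v=(c_1,\dots,c_n)$, the elementary symmetric curve associated to $v$ is the complex algebraic variety $C$ (in $\mathbb{C}^n$, viewed inside $\mathbb{P}^n_{\mathbb{C}}$) cut out by $e_k(x_1,\dots,x_n)=e_k(c_1,\dots,c_n)$ for $k=1,\dots,n-1$, where $e_k$ is the $k$-th elementary symmetric polynomial. $S_n$ acts on $\mathbb{C}^n$ by permuting coordinates, which permutes the irreducible components of $C$. *)

theory Defs
  imports Complex_Main "HOL-Combinatorics.Combinatorics" "HOL-Computational_Algebra.Primes"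
begin

text \<open>Points of complex affine n-space: functions nat to complex vanishing outside {..<n}.\<close>
definition aspace :: "nat \<Rightarrow> (nat \<Rightarrow> complex) set" where
  "aspace n = {x. \<forall>i. n \<le> i \<longrightarrow> x i = 0}"

inductive_set poly_fun :: "nat \<Rightarrow> ((nat \<Rightarrow> complex) \<Rightarrow> complex) set" for n where
  const: "(\<lambda>x. c) \<in> poly_fun n"
| var: "i < n \<Longrightarrow> (\<lambda>x. x i) \<in> poly_fun n"
| add: "f \<in> poly_fun n \<Longrightarrow> g \<in> poly_fun n \<Longrightarrow> (\<lambda>x. f x + g x) \<in> poly_fun n"
| mult: "f \<in> poly_fun n \<Longrightarrow> g \<in> poly_fun n \<Longrightarrow> (\<lambda>x. f x * g x) \<in> poly_fun n"

definition zariski_closed :: "nat \<Rightarrow> (nat \<Rightarrow> complex) set \<Rightarrow> bool" where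
  "zariski_closed n S \<longleftrightarrow> (\<exists>F \<subseteq> poly_fun n. S = {x \<in> aspace n. \<forall>f\<in>F. f x = 0})"

definition zariski_irreducible :: "nat \<Rightarrow> (nat \<Rightarrow> complex) set \<Rightarrow> bool" where
  "zariski_irreducible n S \<longleftrightarrow> S \<noteq> {} \<and> zariski_closed n S \<and>
     (\<forall>A B. zariski_closed n A \<longrightarrow> zariski_closed n B \<longrightarrow> S = A \<union> B \<longrightarrow> S = A \<or> S = B)"

definition irreducible_component :: "nat \<Rightarrow> (nat \<Rightarrow> complex) set \<Rightarrow> (nat \<Rightarrow> complex) set \<Rightarrow> bool" where
  "irreducible_component n C Z \<longleftrightarrow> zariski_irreducible n Z \<and> Z \<subseteq> C \<and>
     (\<forall>W. zariski_irreducible n W \<longrightarrow> Z \<subseteq> W \<longrightarrow> W \<subseteq> C \<longrightarrow> W = Z)"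

definition esym :: "nat \<Rightarrow> nat \<Rightarrow> (nat \<Rightarrow> 'a::comm_ring_1) \<Rightarrow> 'a" where
  "esym n k x = (\<Sum>S | S \<subseteq> {..<n} \<and> card S = k. \<Prod>i\<in>S. x i)"

definition elem_sym_curve :: "nat \<Rightarrow> (nat \<Rightarrow> complex) \<Rightarrow> (nat \<Rightarrow> complex) set" where
  "elem_sym_curve n c = {x \<in> aspace n. \<forall>k \<in> {1..n-1}. esym n k x = esym n k c}"

definition perm_pt :: "(nat \<Rightarrow> nat) \<Rightarrow> (nat \<Rightarrow> complex) \<Rightarrow> (nat \<Rightarrow> complex)" where
  "perm_pt \<sigma> x = x \<circ> inv \<sigma>"

definition is_full_cycle :: "nat \<Rightarrow> (nat \<Rightarrow> nat) \<Rightarrow> bool" where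
  "is_full_cycle n \<sigma> \<longleftrightarrow> \<sigma> permutes {..<n} \<and>
     (\<exists>cs. distinct cs \<and> length cs = n \<and> set cs = {..<n} \<and> \<sigma> = cycle_of_list cs)"

end

(* Write f(t) = prod_i (t - c_i).  A point x lies on the curve C iff prod_i (t - x_i) = f(t) - m
   for some constant m.  For |w| large, inverting an n-th root of f near infinity gives an injective
   holomorphic T with f(T(w)) = w^n, and the roots of f - w^n are then T(zeta^i w), i < n, where
   zeta = exp(2 pi i / n).  The Zariski closures Gamma_sigma of the images of the connected region
   |w| > R under w |-> (T(zeta^(sigma i) w))_i are irreducible, and they cover C: a polynomial
   vanishing on all of them vanishes at the points of C with |m| large, and eliminating the
   coordinates one at a time with the one-variable Nullstellensatz shows that it then vanishes on
   all of C.  So every irreducible component of C is some Gamma_sigma.  Replacing w by zeta w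
   rotates the coordinates cyclically, hence Gamma_sigma is stabilised by a conjugate of the cycle
   (0 1 ... n-1).  Primality of p is only used for p > 0, and distinctness of the v_i not at all. *)

theory Submission
  imports Defs "HOL-Computational_Algebra.Fundamental_Theorem_Algebra"
    "HOL-Complex_Analysis.Complex_Analysis"
begin

section \<open>Polynomial functions\<close>

lemma poly_fun_uminus: "f \<in> poly_fun n \<Longrightarrow> (\<lambda>x. - f x) \<in> poly_fun n"
  using poly_fun.mult[OF poly_fun.const[of "-1"]] by simp

lemma poly_fun_diff: "f \<in> poly_fun n \<Longrightarrow> g \<in> poly_fun n \<Longrightarrow> (\<lambda>x. f x - g x) \<in> poly_fun n"
  using poly_fun.add[OF _ poly_fun_uminus[of g]] by simp

lemma poly_fun_sum:
  "finite A \<Longrightarrow> (\<And>a. a \<in> A \<Longrightarrow> f a \<in> poly_fun n) \<Longrightarrow> (\<lambda>x. \<Sum>a\<in>A. f a x) \<in> poly_fun n"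
  by (induction A rule: finite_induct) (auto intro: poly_fun.intros)

lemma poly_fun_prod:
  "finite A \<Longrightarrow> (\<And>a. a \<in> A \<Longrightarrow> f a \<in> poly_fun n) \<Longrightarrow> (\<lambda>x. \<Prod>a\<in>A. f a x) \<in> poly_fun n"
  by (induction A rule: finite_induct) (auto intro: poly_fun.intros)

lemma poly_fun_mono: "f \<in> poly_fun n \<Longrightarrow> n \<le> m \<Longrightarrow> f \<in> poly_fun m"
  by (induction rule: poly_fun.induct) (auto intro: poly_fun.intros)

lemma poly_fun_compose:
  "f \<in> poly_fun n \<Longrightarrow> (\<And>i. i < n \<Longrightarrow> (\<lambda>x. \<rho> x i) \<in> poly_fun m) \<Longrightarrow> (\<lambda>x. f (\<rho> x)) \<in> poly_fun m"
  by (induction rule: poly_fun.induct) (auto intro: poly_fun.intros)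

lemma poly_fun_cong: "f \<in> poly_fun n \<Longrightarrow> (\<And>i. i < n \<Longrightarrow> x i = y i) \<Longrightarrow> f x = f y"
  by (induction rule: poly_fun.induct) auto

lemma poly_fun_esym: "esym n k \<in> poly_fun n"
  unfolding esym_def by (auto intro!: poly_fun_sum poly_fun_prod poly_fun.var intro: finite_subset)

lemma poly_fun_perm_pt:
  assumes "\<pi> permutes {..<n}" and "g \<in> poly_fun n"
  shows "(\<lambda>x. g (perm_pt \<pi> x)) \<in> poly_fun n"
  using assms(2)
proof (rule poly_fun_compose)
  fix i assume "i < n"
  then have "inv \<pi> i < n" using permutes_in_image[OF permutes_inv[OF assms(1)]] by simp
  then show "(\<lambda>x. perm_pt \<pi> x i) \<in> poly_fun n" unfolding perm_pt_def by (simp add: poly_fun.var)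
qed

lemma poly_fun_holomorphic_on:
  assumes "g \<in> poly_fun n" and "\<And>i. i < n \<Longrightarrow> (\<lambda>w. \<Psi> w i) holomorphic_on D"
  shows "(\<lambda>w. g (\<Psi> w)) holomorphic_on D"
  using assms by (induction rule: poly_fun.induct) (auto intro!: holomorphic_intros)

section \<open>Polynomials with polynomial coefficients\<close>

text \<open>\<open>poly_family n Q\<close> says that \<open>Q\<close> is an element of \<open>\<complex>[x\<^sub>0, \<dots>, x\<^sub>n\<^sub>-\<^sub>1][t]\<close>.\<close>
definition poly_family :: "nat \<Rightarrow> ((nat \<Rightarrow> complex) \<Rightarrow> complex poly) \<Rightarrow> bool" where
  "poly_family n Q \<longleftrightarrow> (\<forall>j. (\<lambda>x. coeff (Q x) j) \<in> poly_fun n) \<and> (\<exists>D. \<forall>x. degree (Q x) \<le> D)"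

lemma poly_family_const: "poly_family n (\<lambda>x. P)"
  unfolding poly_family_def by (auto intro: poly_fun.const)

lemma poly_family_var:
  assumes "i < n"
  shows "poly_family n (\<lambda>x. [:x i:])"
proof -
  have "(\<lambda>x. coeff [:x i:] j) \<in> poly_fun n" for j
    using assms by (cases j) (auto intro: poly_fun.intros)
  then show ?thesis unfolding poly_family_def by auto
qed

lemma poly_family_add: "poly_family n P \<Longrightarrow> poly_family n Q \<Longrightarrow> poly_family n (\<lambda>x. P x + Q x)"
  unfolding poly_family_def
  by (auto intro!: poly_fun.add) (metis degree_add_le max.cobounded1 max.cobounded2 order_trans)

lemma poly_family_mult: "poly_family n P \<Longrightarrow> poly_family n Q \<Longrightarrow> poly_family n (\<lambda>x. P x * Q x)"
  unfolding poly_family_def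
  by (auto simp: coeff_mult intro!: poly_fun_sum poly_fun.mult)
    (metis add_mono degree_mult_le order_trans)

lemma poly_family_diff: "poly_family n P \<Longrightarrow> poly_family n Q \<Longrightarrow> poly_family n (\<lambda>x. P x - Q x)"
  using poly_family_add[OF _ poly_family_mult[OF poly_family_const[of n "[:-1:]"]]] by simp

lemma poly_family_power: "poly_family n P \<Longrightarrow> poly_family n (\<lambda>x. P x ^ m)"
  by (induction m) (simp_all add: poly_family_mult poly_family_const)

lemma coeff_synthetic_div:
  fixes P :: "'a::comm_ring_1 poly"
  shows "coeff (synthetic_div P c) m = coeff P (Suc m) + c * coeff (synthetic_div P c) (Suc m)"
proof -
  have "coeff P (Suc m) = coeff ([:-c, 1:] * synthetic_div P c + [:poly P c:]) (Suc m)"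
    by (simp only: synthetic_div_correct')
  also have "\<dots> = - c * coeff (synthetic_div P c) (Suc m) + coeff (synthetic_div P c) m"
    by simp
  finally show ?thesis by (simp add: algebra_simps)
qed

lemma poly_family_synthetic_div:
  assumes "poly_family n P" and c: "c \<in> poly_fun n"
  shows "poly_family n (\<lambda>x. synthetic_div (P x) (c x))"
proof -
  obtain D where D: "\<And>x. degree (P x) \<le> D" and P: "\<And>j. (\<lambda>x. coeff (P x) j) \<in> poly_fun n"
    using assms(1) unfolding poly_family_def by blast
  have deg: "degree (synthetic_div (P x) (c x)) \<le> D" for x
    using D[of x] by (simp add: degree_synthetic_div)
  have high: "coeff (synthetic_div (P x) (c x)) m = 0" if "D \<le> m" for x m
  proof (cases "degree (P x) = 0")
    case True
    then have "synthetic_div (P x) (c x) = 0" by (simp add: synthetic_div_eq_0_iff)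
    then show ?thesis by simp
  next
    case False
    then have "degree (synthetic_div (P x) (c x)) < m"
      using D[of x] that by (simp add: degree_synthetic_div)
    then show ?thesis by (simp add: coeff_eq_0)
  qed
  have low: "(\<lambda>x. coeff (synthetic_div (P x) (c x)) m) \<in> poly_fun n" if "m \<le> D" for m
    using that
  proof (induction m rule: inc_induct)
    case base
    show ?case using high[of D] poly_fun.const[of 0 n] by simp
  next
    case (step m)
    have "(\<lambda>x. coeff (synthetic_div (P x) (c x)) m) =
        (\<lambda>x. coeff (P x) (Suc m) + c x * coeff (synthetic_div (P x) (c x)) (Suc m))"
      by (rule ext) (rule coeff_synthetic_div)
    then show ?case by (simp only:) (intro poly_fun.add poly_fun.mult P c step.IH)
  qed
  have "(\<lambda>x. coeff (synthetic_div (P x) (c x)) m) \<in> poly_fun n" for m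
    using low[of m] high[of m] poly_fun.const[of 0 n] by (cases "m \<le> D") auto
  then show ?thesis unfolding poly_family_def using deg by blast
qed

lemma degree_long_division_step:
  fixes Q R :: "'a::comm_ring_1 poly"
  assumes "degree Q \<le> D" "degree R = d" "coeff R d = 1" "d \<le> D"
  shows "degree (Q - monom (coeff Q D) (D - d) * R) \<le> D - 1"
proof (rule degree_le, intro allI impI)
  fix i assume "D - 1 < i"
  then consider "i = D" | "D < i" by linarith
  then show "coeff (Q - monom (coeff Q D) (D - d) * R) i = 0"
  proof cases
    case 1
    then show ?thesis using assms(3,4) by (simp add: coeff_monom_mult)
  next
    case 2
    then have "coeff Q i = 0" "coeff R (i - (D - d)) = 0"
      using assms by (auto intro: coeff_eq_0)
    then show ?thesis using 2 assms(4) by (simp add: coeff_monom_mult)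
  qed
qed

text \<open>One long division step \<open>Q - lc(Q) t\<^bsup>deg Q - d\<^esup> R\<close> lowers a uniform degree bound
  without changing the remainder.\<close>
lemma poly_family_mod:
  assumes "poly_family n Q" "poly_family n R"
    and R_degree: "\<And>x. degree (R x) = d" and R_monic: "\<And>x. coeff (R x) d = 1" and "0 < d"
  shows "poly_family n (\<lambda>x. Q x mod R x)"
proof -
  have R: "\<And>j. (\<lambda>x. coeff (R x) j) \<in> poly_fun n"
    using assms(2) unfolding poly_family_def by blast
  have "(\<lambda>x. coeff (Q x mod R x) j) \<in> poly_fun n"
    if "\<And>j. (\<lambda>x. coeff (Q x) j) \<in> poly_fun n" "\<And>x. degree (Q x) \<le> D" for Q D j
    using that
  proof (induction D arbitrary: Q rule: less_induct)
    case (less D Q)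
    show ?case
    proof (cases "D < d")
      case True
      then have "Q x mod R x = Q x" for x
        using less.prems(2)[of x] R_degree[of x] by (intro mod_poly_less) simp
      then show ?thesis using less.prems(1) by simp
    next
      case False
      define Q' where "Q' x = Q x - monom (coeff (Q x) D) (D - d) * R x" for x
      have "Q' x mod R x = Q x mod R x" for x
        unfolding Q'_def by (simp add: mod_eq_dvd_iff)
      moreover have "(\<lambda>x. coeff (Q' x) j) \<in> poly_fun n" for j
      proof (cases "j < D - d")
        case True
        then show ?thesis using less.prems(1) by (simp add: Q'_def coeff_monom_mult)
      next
        case False
        then show ?thesis using less.prems(1) R
          by (simp add: Q'_def coeff_monom_mult poly_fun_diff poly_fun.mult)
      qed
      moreover have "degree (Q' x) \<le> D - 1" for x
        unfolding Q'_def using less.prems(2) R_degree R_monic False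
        by (intro degree_long_division_step) auto
      moreover have "D - 1 < D" using False \<open>0 < d\<close> by simp
      ultimately show ?thesis using less.IH[of "D - 1" Q'] by simp
    qed
  qed
  moreover have "degree (Q x mod R x) \<le> d" for x
  proof -
    have "R x \<noteq> 0" using R_degree[of x] \<open>0 < d\<close> by auto
    then show ?thesis using degree_mod_less'[of "R x" "Q x"] R_degree[of x]
      by (cases "Q x mod R x = 0") auto
  qed
  ultimately show ?thesis using assms(1) unfolding poly_family_def by blast
qed

lemma poly_fun_as_poly_in_coordinate:
  assumes "f \<in> poly_fun n"
  shows "\<exists>Q. poly_family n Q \<and> (\<forall>x t. f (x(k := t)) = poly (Q x) t)"
  using assms
proof (induction rule: poly_fun.induct)
  case (const c)
  show ?case by (rule exI[of _ "\<lambda>x. [:c:]"]) (simp add: poly_family_const)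
next
  case (var i)
  show ?case
  proof (cases "i = k")
    case True
    show ?thesis by (rule exI[of _ "\<lambda>x. [:0, 1:]"]) (simp add: poly_family_const True)
  next
    case False
    show ?thesis by (rule exI[of _ "\<lambda>x. [:x i:]"]) (simp add: poly_family_var var False)
  qed
next
  case (add f g)
  then obtain P Q where "poly_family n P" "poly_family n Q"
    "\<forall>x t. f (x(k := t)) = poly (P x) t" "\<forall>x t. g (x(k := t)) = poly (Q x) t"
    by blast
  then have "poly_family n (\<lambda>x. P x + Q x) \<and>
      (\<forall>x t. f (x(k := t)) + g (x(k := t)) = poly (P x + Q x) t)"
    by (simp add: poly_family_add)
  then show ?case by blast
next
  case (mult f g)
  then obtain P Q where "poly_family n P" "poly_family n Q"
    "\<forall>x t. f (x(k := t)) = poly (P x) t" "\<forall>x t. g (x(k := t)) = poly (Q x) t"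
    by blast
  then have "poly_family n (\<lambda>x. P x * Q x) \<and>
      (\<forall>x t. f (x(k := t)) * g (x(k := t)) = poly (P x * Q x) t)"
    by (simp add: poly_family_mult)
  then show ?case by blast
qed

lemma poly_family_compose:
  assumes "poly_family m Q" and "\<And>i. i < m \<Longrightarrow> (\<lambda>x. \<rho> x i) \<in> poly_fun m"
  shows "poly_family m (\<lambda>x. Q (\<rho> x))"
  using assms poly_fun_compose[of "\<lambda>x. coeff (Q x) j" m \<rho> m for j]
  unfolding poly_family_def by blast

definition agree_on :: "nat set \<Rightarrow> (nat \<Rightarrow> 'a) \<Rightarrow> (nat \<Rightarrow> 'a) \<Rightarrow> bool" where
  "agree_on I x y \<longleftrightarrow> (\<forall>i\<in>I. x i = y i)"

text \<open>Precomposing with the projection onto the coordinates in \<open>I\<close> makes the coefficients depend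
  on these coordinates only.\<close>
lemma poly_funs_as_polys_in_coordinate:
  assumes "\<forall>N\<in>Ns. N \<in> poly_fun m \<and> (\<forall>x y. agree_on (insert k I) x y \<longrightarrow> N x = N y)"
  obtains Q where "\<And>N. N \<in> Ns \<Longrightarrow> poly_family m (Q N)"
    "\<And>N x t. N \<in> Ns \<Longrightarrow> N (x(k := t)) = poly (Q N x) t"
    "\<And>N x y. N \<in> Ns \<Longrightarrow> agree_on I x y \<Longrightarrow> Q N x = Q N y"
proof -
  define proj where "proj x = (\<lambda>i. if i \<in> I then x i else 0)" for x :: "nat \<Rightarrow> complex"
  have proj: "(\<lambda>x. proj x i) \<in> poly_fun m" if "i < m" for i
    unfolding proj_def by (cases "i \<in> I") (simp_all add: that poly_fun.var poly_fun.const)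
  have "\<exists>Q. poly_family m Q \<and> (\<forall>x t. N (x(k := t)) = poly (Q x) t) \<and>
      (\<forall>x y. agree_on I x y \<longrightarrow> Q x = Q y)" if N: "N \<in> Ns" for N
  proof -
    have "N \<in> poly_fun m" and N_cong: "\<And>x y. agree_on (insert k I) x y \<Longrightarrow> N x = N y"
      using assms N by blast+
    then obtain Q0 where Q0: "poly_family m Q0" "\<And>x t. N (x(k := t)) = poly (Q0 x) t"
      using poly_fun_as_poly_in_coordinate by blast
    have "poly_family m (\<lambda>x. Q0 (proj x))" using Q0(1) proj by (rule poly_family_compose)
    moreover have "N (x(k := t)) = poly (Q0 (proj x)) t" for x t
    proof -
      have "N (x(k := t)) = N ((proj x)(k := t))"
        by (rule N_cong) (simp add: agree_on_def proj_def)
      then show ?thesis using Q0(2) by simp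
    qed
    moreover have "Q0 (proj x) = Q0 (proj y)" if "agree_on I x y" for x y
      using that unfolding agree_on_def proj_def by metis
    ultimately show ?thesis by (intro exI[of _ "\<lambda>x. Q0 (proj x)"]) blast
  qed
  then have "\<exists>Q. \<forall>N\<in>Ns. poly_family m (Q N) \<and> (\<forall>x t. N (x(k := t)) = poly (Q N x) t) \<and>
      (\<forall>x y. agree_on I x y \<longrightarrow> Q N x = Q N y)"
    by (intro bchoice ballI)
  then obtain Q where Q: "\<forall>N\<in>Ns. poly_family m (Q N) \<and> (\<forall>x t. N (x(k := t)) = poly (Q N x) t) \<and>
      (\<forall>x y. agree_on I x y \<longrightarrow> Q N x = Q N y)"
    by blast
  from Q show ?thesis by (intro that) blast+
qed

section \<open>The Zariski topology on \<open>\<complex>\<^sup>n\<close>\<close>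

lemma zariski_closedE:
  assumes "zariski_closed n A"
  obtains F where "F \<subseteq> poly_fun n" "A = {x \<in> aspace n. \<forall>f\<in>F. f x = 0}"
  using assms unfolding zariski_closed_def by blast

lemma zariski_closed_empty: "zariski_closed n {}"
  unfolding zariski_closed_def by (rule exI[of _ "{\<lambda>x. 1}"]) (auto intro: poly_fun.const)

lemma zariski_closed_Int:
  assumes "zariski_closed n A" "zariski_closed n B"
  shows "zariski_closed n (A \<inter> B)"
proof -
  obtain F G where "F \<subseteq> poly_fun n" "A = {x \<in> aspace n. \<forall>f\<in>F. f x = 0}"
    and "G \<subseteq> poly_fun n" "B = {x \<in> aspace n. \<forall>f\<in>G. f x = 0}"
    using assms by (elim zariski_closedE)
  then have "F \<union> G \<subseteq> poly_fun n" "A \<inter> B = {x \<in> aspace n. \<forall>f\<in>F \<union> G. f x = 0}" by auto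
  then show ?thesis unfolding zariski_closed_def by blast
qed

lemma zariski_closed_Un:
  assumes "zariski_closed n A" "zariski_closed n B"
  shows "zariski_closed n (A \<union> B)"
proof -
  obtain F G where F: "F \<subseteq> poly_fun n" "A = {x \<in> aspace n. \<forall>f\<in>F. f x = 0}"
    and G: "G \<subseteq> poly_fun n" "B = {x \<in> aspace n. \<forall>f\<in>G. f x = 0}"
    using assms by (elim zariski_closedE)
  define H where "H = (\<lambda>(f, g) x. f x * g x) ` (F \<times> G)"
  have "H \<subseteq> poly_fun n" using F G unfolding H_def by (auto intro: poly_fun.mult)
  moreover have "A \<union> B = {x \<in> aspace n. \<forall>h\<in>H. h x = 0}"
  proof
    show "A \<union> B \<subseteq> {x \<in> aspace n. \<forall>h\<in>H. h x = 0}" using F G unfolding H_def by auto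
    show "{x \<in> aspace n. \<forall>h\<in>H. h x = 0} \<subseteq> A \<union> B"
    proof (rule subsetI, rule ccontr)
      fix x assume x: "x \<in> {x \<in> aspace n. \<forall>h\<in>H. h x = 0}" and "x \<notin> A \<union> B"
      then obtain f g where "f \<in> F" "f x \<noteq> 0" "g \<in> G" "g x \<noteq> 0" using F G by auto
      moreover from \<open>f \<in> F\<close> \<open>g \<in> G\<close> have "(\<lambda>x. f x * g x) \<in> H"
        unfolding H_def by (auto intro: rev_image_eqI[of "(f, g)"])
      ultimately show False using x by auto
    qed
  qed
  ultimately show ?thesis unfolding zariski_closed_def by blast
qed

lemma zariski_closed_UN:
  "finite I \<Longrightarrow> (\<And>i. i \<in> I \<Longrightarrow> zariski_closed n (A i)) \<Longrightarrow> zariski_closed n (\<Union>i\<in>I. A i)"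
  by (induction I rule: finite_induct) (simp_all add: zariski_closed_empty zariski_closed_Un)

lemma zariski_irreducible_subset_UN:
  assumes Z: "zariski_irreducible n Z" and "finite I"
    and "\<And>i. i \<in> I \<Longrightarrow> zariski_closed n (A i)" and "Z \<subseteq> (\<Union>i\<in>I. A i)"
  shows "\<exists>i\<in>I. Z \<subseteq> A i"
  using assms(2-)
proof (induction I rule: finite_induct)
  case empty
  then show ?case using Z unfolding zariski_irreducible_def by auto
next
  case (insert a I)
  have "zariski_closed n Z" using Z unfolding zariski_irreducible_def by blast
  then have "zariski_closed n (Z \<inter> A a)" "zariski_closed n (Z \<inter> (\<Union>i\<in>I. A i))"
    using insert by (auto intro!: zariski_closed_Int zariski_closed_UN)
  moreover have "Z = (Z \<inter> A a) \<union> (Z \<inter> (\<Union>i\<in>I. A i))" using insert.prems by auto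
  ultimately have "Z \<subseteq> A a \<or> Z \<subseteq> (\<Union>i\<in>I. A i)"
    using Z unfolding zariski_irreducible_def by blast
  then show ?case using insert.IH insert.prems by blast
qed

definition zariski_closure :: "nat \<Rightarrow> (nat \<Rightarrow> complex) set \<Rightarrow> (nat \<Rightarrow> complex) set" where
  "zariski_closure n S = {x \<in> aspace n. \<forall>g\<in>poly_fun n. (\<forall>y\<in>S. g y = 0) \<longrightarrow> g x = 0}"

lemma zariski_closed_closure: "zariski_closed n (zariski_closure n S)"
  unfolding zariski_closed_def zariski_closure_def
  by (rule exI[of _ "{g \<in> poly_fun n. \<forall>y\<in>S. g y = 0}"]) auto

lemma zariski_closure_superset: "S \<subseteq> aspace n \<Longrightarrow> S \<subseteq> zariski_closure n S"
  unfolding zariski_closure_def by auto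

lemma zariski_closure_minimal:
  assumes "zariski_closed n A" and "S \<subseteq> A"
  shows "zariski_closure n S \<subseteq> A"
proof
  fix x assume x: "x \<in> zariski_closure n S"
  obtain F where F: "F \<subseteq> poly_fun n" "A = {x \<in> aspace n. \<forall>f\<in>F. f x = 0}"
    using assms(1) by (elim zariski_closedE)
  have "f x = 0" if "f \<in> F" for f
  proof -
    have "\<forall>y\<in>S. f y = 0" using assms(2) F(2) that by auto
    then show ?thesis using x F(1) that unfolding zariski_closure_def by auto
  qed
  then show "x \<in> A" using x F(2) unfolding zariski_closure_def by auto
qed

lemma perm_pt_aspace:
  assumes "\<pi> permutes {..<n}" and "x \<in> aspace n"
  shows "perm_pt \<pi> x \<in> aspace n"
  using assms(2) permutes_not_in[OF permutes_inv[OF assms(1)]]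
  unfolding aspace_def perm_pt_def by auto

lemma zariski_closure_perm_pt:
  assumes \<pi>: "\<pi> permutes {..<n}" and S: "perm_pt \<pi> ` S \<subseteq> S"
  shows "perm_pt \<pi> ` zariski_closure n S \<subseteq> zariski_closure n S"
proof (rule image_subsetI)
  fix x assume "x \<in> zariski_closure n S"
  then have x: "x \<in> aspace n" "\<And>g. g \<in> poly_fun n \<Longrightarrow> \<forall>y\<in>S. g y = 0 \<Longrightarrow> g x = 0"
    unfolding zariski_closure_def by auto
  have "g (perm_pt \<pi> x) = 0" if g: "g \<in> poly_fun n" and "\<forall>y\<in>S. g y = 0" for g
  proof -
    have "\<forall>y\<in>S. g (perm_pt \<pi> y) = 0" using S that(2) by auto
    then show ?thesis using x(2)[OF poly_fun_perm_pt[OF \<pi> g]] by simp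
  qed
  then show "perm_pt \<pi> x \<in> zariski_closure n S"
    using perm_pt_aspace[OF \<pi> x(1)] unfolding zariski_closure_def by auto
qed

lemma perm_pt_perm_pt_inv:
  assumes "\<pi> permutes {..<n}"
  shows "perm_pt \<pi> (perm_pt (inv \<pi>) x) = x" and "perm_pt (inv \<pi>) (perm_pt \<pi> x) = x"
  unfolding perm_pt_def permutes_inv_inv[OF assms]
  using permutes_inv_o[OF assms] by (simp_all add: comp_assoc)

lemma zariski_closure_perm_pt_eq:
  assumes \<pi>: "\<pi> permutes {..<n}" and S: "perm_pt \<pi> ` S = S"
  shows "perm_pt \<pi> ` zariski_closure n S = zariski_closure n S"
proof
  show "perm_pt \<pi> ` zariski_closure n S \<subseteq> zariski_closure n S"
    using zariski_closure_perm_pt[OF \<pi>] S by simp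
  have "perm_pt (inv \<pi>) ` S = perm_pt (inv \<pi>) ` perm_pt \<pi> ` S" using S by simp
  also have "\<dots> = S" using perm_pt_perm_pt_inv(2)[OF \<pi>] by (simp add: image_image)
  finally have "perm_pt (inv \<pi>) ` zariski_closure n S \<subseteq> zariski_closure n S"
    using zariski_closure_perm_pt[OF permutes_inv[OF \<pi>]] by simp
  show "zariski_closure n S \<subseteq> perm_pt \<pi> ` zariski_closure n S"
  proof
    fix x assume "x \<in> zariski_closure n S"
    then have "perm_pt (inv \<pi>) x \<in> zariski_closure n S"
      using \<open>perm_pt (inv \<pi>) ` zariski_closure n S \<subseteq> zariski_closure n S\<close> by blast
    moreover have "x = perm_pt \<pi> (perm_pt (inv \<pi>) x)" using perm_pt_perm_pt_inv(1)[OF \<pi>] by simp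
    ultimately show "x \<in> perm_pt \<pi> ` zariski_closure n S" by blast
  qed
qed

lemma holomorphic_factor_eq_0:
  assumes "h1 holomorphic_on D" "h2 holomorphic_on D" "open D" "connected D"
    and "\<And>w. w \<in> D \<Longrightarrow> h1 w * h2 w = 0" and "w1 \<in> D" "h1 w1 \<noteq> 0" and "w \<in> D"
  shows "h2 w = 0"
proof -
  have "open (h1 -` (- {0}) \<inter> D)"
    using continuous_on_open_vimage[OF \<open>open D\<close>] holomorphic_on_imp_continuous_on[OF assms(1)]
    by blast
  moreover have "w1 \<in> h1 -` (- {0}) \<inter> D" using assms(6,7) by auto
  ultimately obtain r where r: "r > 0" "ball w1 r \<subseteq> h1 -` (- {0}) \<inter> D"
    using open_contains_ball by blast
  show ?thesis
  proof (rule analytic_continuation[OF assms(2-4) _ assms(6) _ _ assms(8)])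
    show "ball w1 r \<subseteq> D" "w1 islimpt ball w1 r" using r by (auto simp: islimpt_ball)
    show "h2 z = 0" if "z \<in> ball w1 r" for z
    proof -
      have "z \<in> D" "h1 z \<noteq> 0" using r(2) that by blast+
      then show ?thesis using assms(5)[of z] by simp
    qed
  qed
qed

text \<open>By the identity theorem, a polynomial vanishing on a nonempty open part of the image vanishes
  on all of it.\<close>
lemma zariski_irreducible_closure_holomorphic_image:
  assumes D: "open D" "connected D" "D \<noteq> {}"
    and hol: "\<And>i. i < n \<Longrightarrow> (\<lambda>w. \<Psi> w i) holomorphic_on D" and "\<Psi> ` D \<subseteq> aspace n"
  shows "zariski_irreducible n (zariski_closure n (\<Psi> ` D))"
  unfolding zariski_irreducible_def
proof (intro conjI allI impI)
  have sup: "\<Psi> ` D \<subseteq> zariski_closure n (\<Psi> ` D)"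
    using zariski_closure_superset assms(5) .
  then show "zariski_closure n (\<Psi> ` D) \<noteq> {}" using D(3) by blast
  show "zariski_closed n (zariski_closure n (\<Psi> ` D))" by (rule zariski_closed_closure)
  fix A B assume A: "zariski_closed n A" and B: "zariski_closed n B"
    and AB: "zariski_closure n (\<Psi> ` D) = A \<union> B"
  obtain FA where FA: "FA \<subseteq> poly_fun n" "A = {x \<in> aspace n. \<forall>f\<in>FA. f x = 0}"
    using A by (elim zariski_closedE)
  obtain FB where FB: "FB \<subseteq> poly_fun n" "B = {x \<in> aspace n. \<forall>f\<in>FB. f x = 0}"
    using B by (elim zariski_closedE)
  have "\<Psi> ` D \<subseteq> A \<or> \<Psi> ` D \<subseteq> B"
  proof (rule ccontr)
    assume "\<not> (\<Psi> ` D \<subseteq> A \<or> \<Psi> ` D \<subseteq> B)"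
    then obtain w1 w2 where w: "w1 \<in> D" "\<Psi> w1 \<notin> A" "w2 \<in> D" "\<Psi> w2 \<notin> B" by blast
    then obtain fa fb where fa: "fa \<in> FA" "fa (\<Psi> w1) \<noteq> 0" and fb: "fb \<in> FB" "fb (\<Psi> w2) \<noteq> 0"
      using assms(5) FA(2) FB(2) by auto
    have prod: "fa (\<Psi> w) * fb (\<Psi> w) = 0" if "w \<in> D" for w
    proof -
      have "\<Psi> w \<in> A \<union> B" using sup AB that by blast
      then show ?thesis using FA(2) FB(2) fa(1) fb(1) by auto
    qed
    have "(\<lambda>w. fa (\<Psi> w)) holomorphic_on D" "(\<lambda>w. fb (\<Psi> w)) holomorphic_on D"
      using fa(1) fb(1) FA(1) FB(1) by (auto intro: poly_fun_holomorphic_on[OF _ hol])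
    from holomorphic_factor_eq_0[OF this D(1,2) prod w(1) fa(2) w(3)]
    have "fb (\<Psi> w2) = 0" .
    with fb(2) show False by contradiction
  qed
  then show "zariski_closure n (\<Psi> ` D) = A \<or> zariski_closure n (\<Psi> ` D) = B"
    using zariski_closure_minimal[OF A] zariski_closure_minimal[OF B] AB by blast
qed

section \<open>The elementary symmetric curve\<close>

definition root_poly :: "nat \<Rightarrow> (nat \<Rightarrow> complex) \<Rightarrow> complex poly" where
  "root_poly n x = (\<Prod>i<n. [:- x i, 1:])"

lemma poly_root_poly_eq_0_iff: "poly (root_poly n x) t = 0 \<longleftrightarrow> t \<in> x ` {..<n}"
  unfolding root_poly_def by (auto simp: poly_prod)

lemma root_poly_Suc: "root_poly (Suc k) x = root_poly k x * [:- x k, 1:]"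
  unfolding root_poly_def by simp

lemma root_poly_nonzero: "root_poly k x \<noteq> 0"
  unfolding root_poly_def by (simp add: prod_zero_iff)

lemma root_poly_cong: "(\<And>i. i < n \<Longrightarrow> x i = y i) \<Longrightarrow> root_poly n x = root_poly n y"
  unfolding root_poly_def by simp

lemma root_poly_permute:
  assumes "\<sigma> permutes {..<n}"
  shows "root_poly n (x \<circ> \<sigma>) = root_poly n x"
  unfolding root_poly_def
  using prod.reindex_bij_betw[OF permutes_imp_bij[OF assms], of "\<lambda>j. [:- x j, 1:]"] by simp

lemma coeff_root_poly:
  "coeff (root_poly n x) j =
     (\<Sum>B\<in>Pow {..<n}. if card ({..<n} - B) = j then \<Prod>i\<in>B. - x i else 0)"
proof -
  have "root_poly n x = (\<Prod>i<n. [:- x i:] + [:0, 1:])" unfolding root_poly_def by simp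
  also have "\<dots> = (\<Sum>B\<in>Pow {..<n}. (\<Prod>i\<in>B. [:- x i:]) * (\<Prod>i\<in>{..<n} - B. [:0, 1:]))"
    by (rule prod_add) simp
  also have "\<dots> = (\<Sum>B\<in>Pow {..<n}. monom (\<Prod>i\<in>B. - x i) (card ({..<n} - B)))"
  proof (rule sum.cong)
    fix B assume "B \<in> Pow {..<n}"
    then have "finite B" by (auto intro: finite_subset)
    have "(\<Prod>i\<in>B. [:- x i:]) = [:\<Prod>i\<in>B. - x i:]"
      using \<open>finite B\<close> by (induction B rule: finite_induct) (simp_all add: mult.commute)
    then show "(\<Prod>i\<in>B. [:- x i:]) * (\<Prod>i\<in>{..<n} - B. [:0, 1:]) =
        monom (\<Prod>i\<in>B. - x i) (card ({..<n} - B))"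
      by (simp add: monom_altdef)
  qed simp
  finally show ?thesis by (simp add: coeff_sum coeff_monom)
qed

lemma coeff_root_poly_esym: "k \<le> n \<Longrightarrow> coeff (root_poly n x) (n - k) = (-1) ^ k * esym n k x"
proof -
  assume k: "k \<le> n"
  have "card ({..<n} - B) = n - k \<longleftrightarrow> card B = k" if "B \<in> Pow {..<n}" for B
  proof -
    have B: "B \<subseteq> {..<n}" "finite B" using that by (auto intro: finite_subset)
    then have "card ({..<n} - B) = n - card B" "card B \<le> n"
      using card_Diff_subset[OF B(2,1)] card_mono[of "{..<n}" B] by auto
    then show ?thesis using k by auto
  qed
  then have "coeff (root_poly n x) (n - k) =
      (\<Sum>B\<in>Pow {..<n}. if card B = k then \<Prod>i\<in>B. - x i else 0)"
    unfolding coeff_root_poly by (intro sum.cong) auto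
  also have "\<dots> = (\<Sum>B\<in>{B \<in> Pow {..<n}. card B = k}. \<Prod>i\<in>B. - x i)"
    by (rule sum.inter_filter[symmetric]) simp
  also have "\<dots> = (\<Sum>B\<in>{B \<in> Pow {..<n}. card B = k}. (-1) ^ k * (\<Prod>i\<in>B. x i))"
    by (intro sum.cong) (auto simp: prod_uminus)
  also have "\<dots> = (-1) ^ k * esym n k x"
    unfolding esym_def by (simp add: sum_distrib_left Pow_def)
  finally show ?thesis .
qed

lemma esym_0: "esym n 0 x = 1"
proof -
  have "S = {}" if "S \<subseteq> {..<n}" "card S = 0" for S
    using that finite_subset[OF that(1)] by auto
  then have "{S. S \<subseteq> {..<n} \<and> card S = 0} = {{}}" by auto
  then show ?thesis unfolding esym_def by simp
qed

lemma coeff_root_poly_above: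
  assumes "n < j"
  shows "coeff (root_poly n x) j = 0"
proof -
  have "card ({..<n} - B) \<noteq> j" for B
    using card_mono[of "{..<n}" "{..<n} - B"] assms by auto
  then show ?thesis unfolding coeff_root_poly by simp
qed

lemma coeff_root_poly_top: "coeff (root_poly n x) n = 1"
  using coeff_root_poly_esym[of 0 n x] esym_0 by simp

lemma degree_root_poly: "degree (root_poly n x) = n"
proof (rule antisym)
  show "degree (root_poly n x) \<le> n" by (rule degree_le) (simp add: coeff_root_poly_above)
  show "n \<le> degree (root_poly n x)" by (rule le_degree) (simp add: coeff_root_poly_top)
qed

lemma eq_minus_const_iff_coeff_eq:
  fixes A B :: "'a::comm_ring_1 poly"
  shows "(\<exists>m. A = B - [:m:]) \<longleftrightarrow> (\<forall>j>0. coeff A j = coeff B j)"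
proof
  assume "\<exists>m. A = B - [:m:]"
  then show "\<forall>j>0. coeff A j = coeff B j" by (auto simp: gr0_conv_Suc)
next
  assume "\<forall>j>0. coeff A j = coeff B j"
  then have "A = B - [:coeff B 0 - coeff A 0:]"
    by (intro poly_eqI) (auto simp: coeff_pCons split: nat.split)
  then show "\<exists>m. A = B - [:m:]" ..
qed

lemma elem_sym_curve_iff:
  "x \<in> elem_sym_curve n c \<longleftrightarrow> x \<in> aspace n \<and> (\<exists>m. root_poly n x = root_poly n c - [:m:])"
proof -
  have "(\<forall>k\<in>{1..n-1}. esym n k x = esym n k c) \<longleftrightarrow>
      (\<forall>j>0. coeff (root_poly n x) j = coeff (root_poly n c) j)"
  proof safe
    fix j :: nat assume e: "\<forall>k\<in>{1..n-1}. esym n k x = esym n k c" and "0 < j"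
    show "coeff (root_poly n x) j = coeff (root_poly n c) j"
    proof (cases "j < n")
      case True
      then have "n - j \<in> {1..n-1}" "n - (n - j) = j" using \<open>0 < j\<close> by auto
      then show ?thesis using e coeff_root_poly_esym[of "n - j" n] by (metis diff_le_self)
    next
      case False
      then show ?thesis
        by (cases "j = n") (simp_all add: coeff_root_poly_top coeff_root_poly_above)
    qed
  next
    fix k assume e: "\<forall>j>0. coeff (root_poly n x) j = coeff (root_poly n c) j" and "k \<in> {1..n-1}"
    then have "0 < n - k" "k \<le> n" by auto
    then have "(-1) ^ k * esym n k x = (-1) ^ k * esym n k c"
      using e coeff_root_poly_esym[of k n] by metis
    then show "esym n k x = esym n k c" by simp
  qed
  then show ?thesis
    unfolding elem_sym_curve_def eq_minus_const_iff_coeff_eq by blast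
qed

lemma zariski_closed_elem_sym_curve: "zariski_closed n (elem_sym_curve n c)"
  unfolding zariski_closed_def
proof (intro exI conjI)
  let ?F = "(\<lambda>k x. esym n k x - esym n k c) ` {1..n-1}"
  show "?F \<subseteq> poly_fun n" using poly_fun_esym by (auto intro!: poly_fun_diff poly_fun.const)
  show "elem_sym_curve n c = {x \<in> aspace n. \<forall>f\<in>?F. f x = 0}"
    unfolding elem_sym_curve_def by auto
qed

lemma monic_eq_root_poly:
  assumes "degree P = n" "coeff P n = 1" "inj_on a {..<n}" "\<And>i. i < n \<Longrightarrow> poly P (a i) = 0"
  shows "P = root_poly n a"
  using assms
proof (induction n arbitrary: P)
  case 0
  then show ?case unfolding root_poly_def by (metis lessThan_0 prod.empty degree_0_id one_pCons)
next
  case (Suc n)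
  obtain Q where PQ: "P = [:- a n, 1:] * Q"
    using Suc.prems(4)[of n] by (metis dvdE poly_eq_0_iff_dvd lessI)
  then have "Q \<noteq> 0" using Suc.prems(1) by auto
  have "degree P = degree [:- a n, 1:] + degree Q"
    unfolding PQ by (rule degree_mult_eq) (simp_all add: \<open>Q \<noteq> 0\<close>)
  then have "degree Q = n" using Suc.prems(1) by simp
  have "lead_coeff P = 1" using Suc.prems(1,2) by simp
  then have "lead_coeff Q = 1" unfolding PQ lead_coeff_mult by simp
  with \<open>degree Q = n\<close> have "coeff Q n = 1" by simp
  note \<open>degree Q = n\<close> this
  moreover have "inj_on a {..<n}" using Suc.prems(3) by (rule inj_on_subset) auto
  moreover have "poly Q (a i) = 0" if "i < n" for i
  proof -
    have "a i \<noteq> a n" using Suc.prems(3) that by (auto dest: inj_onD)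
    then show ?thesis using Suc.prems(4)[of i] that PQ by simp
  qed
  ultimately have "Q = root_poly n a" by (rule Suc.IH)
  then show ?case using PQ by (simp add: root_poly_Suc mult.commute)
qed

section \<open>Elimination along the lifted curve\<close>

lemma roots_subset_iff_coeff_power_mod:
  fixes Q R :: "complex poly"
  assumes "R \<noteq> 0"
  shows "(\<forall>t. poly R t = 0 \<longrightarrow> poly Q t = 0) \<longleftrightarrow>
    (\<forall>j<degree R. coeff (Q ^ degree R mod R) j = 0)"
proof -
  have "(\<forall>t. poly R t = 0 \<longrightarrow> poly Q t = 0) \<longleftrightarrow> Q ^ degree R mod R = 0"
    using nullstellensatz_univariate[of R Q] assms by (simp add: dvd_eq_mod_eq_0)
  also have "\<dots> \<longleftrightarrow> (\<forall>j<degree R. coeff (Q ^ degree R mod R) j = 0)"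
  proof
    assume low: "\<forall>j<degree R. coeff (Q ^ degree R mod R) j = 0"
    have "coeff (Q ^ degree R mod R) j = 0" if "degree R \<le> j" for j
      using degree_mod_less'[OF assms, of "Q ^ degree R"] that
      by (cases "Q ^ degree R mod R = 0") (auto intro: coeff_eq_0)
    with low show "Q ^ degree R mod R = 0" by (intro poly_eqI) (metis coeff_0 not_less)
  qed simp
  finally show ?thesis .
qed

lemma poly_eq_0_if_vanishes_near_infinity:
  fixes Q :: "complex poly"
  assumes "\<And>t. M < norm t \<Longrightarrow> poly Q t = 0"
  shows "Q = 0"
proof (rule ccontr)
  assume "Q \<noteq> 0"
  have "{t. M < norm t} \<subseteq> {t. poly Q t = 0}" using assms by auto
  from finite_subset[OF this poly_roots_finite[OF \<open>Q \<noteq> 0\<close>]]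
  have "bounded {t::complex. M < norm t}" by auto
  then obtain B where B: "\<forall>t\<in>{t::complex. M < norm t}. norm t \<le> B"
    unfolding bounded_iff by blast
  define t where "t = complex_of_real (max M B + 1)"
  have "norm t = \<bar>max M B + 1\<bar>" unfolding t_def by simp
  then have "M < norm t" "B < norm t" by linarith+
  with B show False by auto
qed

locale monic_poly =
  fixes f :: "complex poly" and n :: nat
  assumes degree_f: "degree f = n" and coeff_f_top: "coeff f n = 1" and n_pos: "0 < n"
begin

text \<open>Points get one extra coordinate \<open>x n\<close>, the constant term: \<open>x\<close> lies on the lifted curve
  when \<open>f - x n = (t - x\<^sub>0) \<cdots> (t - x\<^sub>n\<^sub>-\<^sub>1)\<close>.  In \<open>split_prefix k\<close> the roots
  \<open>x\<^sub>0, \<dots>, x\<^sub>k\<^sub>-\<^sub>1\<close> have been split off from \<open>f - x n\<close> one after the other, leaving the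
  quotient \<open>partial_quotient k x\<close>.\<close>

fun partial_quotient :: "nat \<Rightarrow> (nat \<Rightarrow> complex) \<Rightarrow> complex poly" where
  "partial_quotient 0 x = f - [:x n:]"
| "partial_quotient (Suc k) x = synthetic_div (partial_quotient k x) (x k)"

fun split_prefix :: "nat \<Rightarrow> (nat \<Rightarrow> complex) set" where
  "split_prefix 0 = UNIV"
| "split_prefix (Suc k) = {x \<in> split_prefix k. poly (partial_quotient k x) (x k) = 0}"

lemma degree_f_minus_const: "degree (f - [:m:]) = n"
  using degree_f n_pos by (simp add: diff_conv_add_uminus degree_add_eq_left)

lemma coeff_f_minus_const_top: "coeff (f - [:m:]) n = 1"
  using coeff_f_top n_pos by (cases n) auto

lemma degree_partial_quotient: "degree (partial_quotient k x) = n - k"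
  by (induction k) (simp_all add: degree_f_minus_const degree_synthetic_div)

lemma coeff_partial_quotient_top: "k \<le> n \<Longrightarrow> coeff (partial_quotient k x) (n - k) = 1"
proof (induction k)
  case 0
  show ?case using coeff_f_minus_const_top[of "x n"] by simp
next
  case (Suc k)
  have "n - k = Suc (n - Suc k)" using Suc.prems by simp
  moreover have "coeff (partial_quotient (Suc k) x) (Suc (n - Suc k)) = 0"
    using degree_partial_quotient[of "Suc k" x] by (intro coeff_eq_0) simp
  ultimately show ?case using Suc coeff_synthetic_div[of "partial_quotient k x" "x k" "n - Suc k"] by simp
qed

lemma partial_quotient_nonzero: "k \<le> n \<Longrightarrow> partial_quotient k x \<noteq> 0"
  using coeff_partial_quotient_top[of k x] by auto

lemma poly_family_partial_quotient: "k \<le> n \<Longrightarrow> poly_family (Suc n) (partial_quotient k)"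
proof (induction k)
  case 0
  show ?case
    by (simp add: poly_family_diff poly_family_const poly_family_var)
next
  case (Suc k)
  then show ?case by (simp add: poly_family_synthetic_div poly_fun.var)
qed

lemma partial_quotient_cong:
  "agree_on (insert n {..<k}) x y \<Longrightarrow> partial_quotient k x = partial_quotient k y"
  by (induction k) (simp_all add: agree_on_def)

lemma split_prefix_cong:
  "agree_on (insert n {..<k}) x y \<Longrightarrow> x \<in> split_prefix k \<longleftrightarrow> y \<in> split_prefix k"
proof (induction k)
  case (Suc k)
  then have a: "agree_on (insert n {..<k}) x y" "x k = y k" by (auto simp: agree_on_def)
  with Suc.IH partial_quotient_cong[OF a(1)] show ?case by simp
qed simp

lemma split_prefix_antimono: "k \<le> m \<Longrightarrow> x \<in> split_prefix m \<Longrightarrow> x \<in> split_prefix k"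
  by (induction m rule: dec_induct) auto

lemma split_prefix_factor:
  "x \<in> split_prefix k \<Longrightarrow> f - [:x n:] = root_poly k x * partial_quotient k x"
proof (induction k)
  case 0
  then show ?case by (simp add: root_poly_def)
next
  case (Suc k)
  then have x: "x \<in> split_prefix k" and root: "poly (partial_quotient k x) (x k) = 0" by auto
  have q: "partial_quotient k x = [:- x k, 1:] * partial_quotient (Suc k) x"
    using synthetic_div_correct'[of "x k" "partial_quotient k x"] root
    by (metis partial_quotient.simps(2) add_0_right pCons_0_0)
  have "f - [:x n:] = root_poly k x * partial_quotient k x" by (rule Suc.IH[OF x])
  also have "\<dots> = root_poly (Suc k) x * partial_quotient (Suc k) x"
    by (simp only: q root_poly_Suc mult.assoc)
  finally show ?case .
qed

lemma split_prefix_if_factor: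
  "k \<le> n \<Longrightarrow> f - [:x n:] = root_poly k x * q \<Longrightarrow> x \<in> split_prefix k"
proof (induction k arbitrary: q)
  case (Suc k)
  have eq: "f - [:x n:] = root_poly k x * ([:- x k, 1:] * q)"
    using Suc.prems(2) by (simp only: root_poly_Suc mult.assoc)
  have x: "x \<in> split_prefix k" using Suc.IH[OF _ eq] Suc.prems(1) by simp
  have "root_poly k x * partial_quotient k x = root_poly k x * ([:- x k, 1:] * q)"
    by (rule trans[OF split_prefix_factor[OF x, symmetric] eq])
  then have "partial_quotient k x = [:- x k, 1:] * q"
    using root_poly_nonzero mult_left_cancel by blast
  with x show ?case by simp
qed simp

lemma split_prefix_top_iff: "x \<in> split_prefix n \<longleftrightarrow> f - [:x n:] = root_poly n x"
proof
  assume x: "x \<in> split_prefix n"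
  have "degree (partial_quotient n x) = 0" "coeff (partial_quotient n x) 0 = 1"
    using degree_partial_quotient[of n x] coeff_partial_quotient_top[of n x] by simp_all
  then have "partial_quotient n x = 1" by (metis degree_0_id one_pCons)
  then show "f - [:x n:] = root_poly n x" using split_prefix_factor[OF x] by simp
qed (use split_prefix_if_factor[of n x 1] in simp)

definition fibre_vanishing :: "((nat \<Rightarrow> complex) \<Rightarrow> complex) \<Rightarrow> nat \<Rightarrow> (nat \<Rightarrow> complex) \<Rightarrow> bool" where
  "fibre_vanishing G k x \<longleftrightarrow> (\<forall>y \<in> split_prefix n. agree_on (insert n {..<k}) x y \<longrightarrow> G y = 0)"

definition fibre_vanishing_algebraic :: "((nat \<Rightarrow> complex) \<Rightarrow> complex) \<Rightarrow> nat \<Rightarrow> bool" where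
  "fibre_vanishing_algebraic G k \<longleftrightarrow> (\<exists>Ns. finite Ns \<and>
     (\<forall>N\<in>Ns. N \<in> poly_fun (Suc n) \<and> (\<forall>x y. agree_on (insert n {..<k}) x y \<longrightarrow> N x = N y)) \<and>
     (\<forall>x \<in> split_prefix k. fibre_vanishing G k x \<longleftrightarrow> (\<forall>N\<in>Ns. N x = 0)))"

lemma fibre_vanishing_Suc:
  assumes "k < n" and "x \<in> split_prefix k"
  shows "fibre_vanishing G k x \<longleftrightarrow>
    (\<forall>t. poly (partial_quotient k x) t = 0 \<longrightarrow> fibre_vanishing G (Suc k) (x(k := t)))"
proof safe
  fix t assume "fibre_vanishing G k x"
  moreover have "agree_on (insert n {..<k}) x y"
    if "agree_on (insert n {..<Suc k}) (x(k := t)) y" for y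
    using that \<open>k < n\<close> unfolding agree_on_def by (metis fun_upd_other insert_iff lessThan_iff
        less_Suc_eq nat_neq_iff)
  ultimately show "fibre_vanishing G (Suc k) (x(k := t))"
    unfolding fibre_vanishing_def by blast
next
  assume r: "\<forall>t. poly (partial_quotient k x) t = 0 \<longrightarrow> fibre_vanishing G (Suc k) (x(k := t))"
  show "fibre_vanishing G k x"
    unfolding fibre_vanishing_def
  proof (intro ballI impI)
    fix y assume y: "y \<in> split_prefix n" and a: "agree_on (insert n {..<k}) x y"
    have "y \<in> split_prefix (Suc k)" using split_prefix_antimono[of "Suc k" n y] y \<open>k < n\<close> by simp
    then have "poly (partial_quotient k x) (y k) = 0" using partial_quotient_cong[OF a] by simp
    then have "fibre_vanishing G (Suc k) (x(k := y k))" using r by simp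
    moreover have "agree_on (insert n {..<Suc k}) (x(k := y k)) y"
      using a unfolding agree_on_def by auto
    ultimately show "G y = 0" using y unfolding fibre_vanishing_def by blast
  qed
qed

lemma fibre_vanishing_algebraic_top:
  assumes G: "G \<in> poly_fun (Suc n)"
  shows "fibre_vanishing_algebraic G n"
  unfolding fibre_vanishing_algebraic_def
proof (intro exI[of _ "{G}"] conjI)
  have G_cong: "G x = G y" if "agree_on (insert n {..<n}) x y" for x y
    using that by (intro poly_fun_cong[OF G]) (auto simp: agree_on_def less_Suc_eq)
  then show "\<forall>N\<in>{G}. N \<in> poly_fun (Suc n) \<and> (\<forall>x y. agree_on (insert n {..<n}) x y \<longrightarrow> N x = N y)"
    using G by blast
  show "\<forall>x\<in>split_prefix n. fibre_vanishing G n x \<longleftrightarrow> (\<forall>N\<in>{G}. N x = 0)"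
  proof (rule ballI, rule iffI)
    fix x assume "x \<in> split_prefix n" "fibre_vanishing G n x"
    moreover have "agree_on (insert n {..<n}) x x" by (simp add: agree_on_def)
    ultimately show "\<forall>N\<in>{G}. N x = 0" unfolding fibre_vanishing_def by blast
  next
    fix x assume "\<forall>N\<in>{G}. N x = 0"
    then show "fibre_vanishing G n x" unfolding fibre_vanishing_def by (metis G_cong singletonI)
  qed
qed simp

text \<open>Eliminating \<open>x\<^sub>k\<close>, which ranges over the roots of \<open>R = partial_quotient k x\<close>: by the
  Nullstellensatz in one variable, a polynomial \<open>Q\<close> vanishes at all these roots iff \<open>R\<close> divides
  \<open>Q\<^bsup>deg R\<^esup>\<close>.\<close>
lemma fibre_vanishing_iff_coeff_power_mod:
  assumes "k < n" and x: "x \<in> split_prefix k"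
    and vanish: "\<forall>y \<in> split_prefix (Suc k). fibre_vanishing G (Suc k) y \<longleftrightarrow> (\<forall>N\<in>Ns. N y = 0)"
    and Q: "\<And>N t. N \<in> Ns \<Longrightarrow> N (x(k := t)) = poly (Q N) t"
  shows "fibre_vanishing G k x \<longleftrightarrow>
    (\<forall>N\<in>Ns. \<forall>j<n - k. coeff (Q N ^ (n - k) mod partial_quotient k x) j = 0)"
proof -
  let ?R = "partial_quotient k x"
  have line: "fibre_vanishing G (Suc k) (x(k := t)) \<longleftrightarrow> (\<forall>N\<in>Ns. poly (Q N) t = 0)"
    if "poly ?R t = 0" for t
  proof -
    have a: "agree_on (insert n {..<k}) x (x(k := t))" using \<open>k < n\<close> by (auto simp: agree_on_def)
    have "x(k := t) \<in> split_prefix k" using x split_prefix_cong[OF a] by blast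
    moreover have "poly (partial_quotient k (x(k := t))) t = 0"
      using that partial_quotient_cong[OF a] by simp
    ultimately have "x(k := t) \<in> split_prefix (Suc k)" by simp
    then show ?thesis using vanish Q by auto
  qed
  have "fibre_vanishing G k x \<longleftrightarrow> (\<forall>t. poly ?R t = 0 \<longrightarrow> (\<forall>N\<in>Ns. poly (Q N) t = 0))"
    using fibre_vanishing_Suc[OF \<open>k < n\<close> x] line by simp
  also have "\<dots> \<longleftrightarrow> (\<forall>N\<in>Ns. \<forall>t. poly ?R t = 0 \<longrightarrow> poly (Q N) t = 0)" by auto
  also have "\<dots> \<longleftrightarrow> (\<forall>N\<in>Ns. \<forall>j<n - k. coeff (Q N ^ (n - k) mod ?R) j = 0)"
    using roots_subset_iff_coeff_power_mod[OF partial_quotient_nonzero[of k x]] \<open>k < n\<close>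
    by (simp add: degree_partial_quotient)
  finally show ?thesis .
qed

lemma poly_fun_coeff_power_mod_partial_quotient:
  assumes "k < n" and "poly_family (Suc n) Q"
  shows "(\<lambda>x. coeff (Q x ^ (n - k) mod partial_quotient k x) j) \<in> poly_fun (Suc n)"
proof -
  have "poly_family (Suc n) (\<lambda>x. Q x ^ (n - k) mod partial_quotient k x)"
    using poly_family_mod[OF poly_family_power[OF assms(2)] poly_family_partial_quotient
        degree_partial_quotient coeff_partial_quotient_top] \<open>k < n\<close>
    by simp
  then show ?thesis unfolding poly_family_def by blast
qed

lemma fibre_vanishing_algebraic_step:
  assumes "k < n" and "fibre_vanishing_algebraic G (Suc k)"
  shows "fibre_vanishing_algebraic G k"
proof -
  obtain Ns' where "finite Ns'"
    and Ns': "\<forall>N\<in>Ns'.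
      N \<in> poly_fun (Suc n) \<and> (\<forall>x y. agree_on (insert n {..<Suc k}) x y \<longrightarrow> N x = N y)"
    and vanish': "\<forall>x \<in> split_prefix (Suc k).
      fibre_vanishing G (Suc k) x \<longleftrightarrow> (\<forall>N\<in>Ns'. N x = 0)"
    using assms(2) unfolding fibre_vanishing_algebraic_def by (elim exE conjE)
  have "insert k (insert n {..<k}) = insert n {..<Suc k}" by auto
  then have Ns'_k: "\<forall>N\<in>Ns'. N \<in> poly_fun (Suc n) \<and>
      (\<forall>x y. agree_on (insert k (insert n {..<k})) x y \<longrightarrow> N x = N y)"
    using Ns' by simp
  obtain Q where Q: "\<And>N. N \<in> Ns' \<Longrightarrow> poly_family (Suc n) (Q N)"
    "\<And>N x t. N \<in> Ns' \<Longrightarrow> N (x(k := t)) = poly (Q N x) t"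
    "\<And>N x y. N \<in> Ns' \<Longrightarrow> agree_on (insert n {..<k}) x y \<Longrightarrow> Q N x = Q N y"
    using poly_funs_as_polys_in_coordinate[OF Ns'_k] by blast
  define Ns where
    "Ns = (\<lambda>(N, j) x. coeff (Q N x ^ (n - k) mod partial_quotient k x) j) ` (Ns' \<times> {..<n - k})"
  have "finite Ns" unfolding Ns_def using \<open>finite Ns'\<close> by simp
  moreover have "N' \<in> poly_fun (Suc n) \<and> (\<forall>x y. agree_on (insert n {..<k}) x y \<longrightarrow> N' x = N' y)"
    if mem: "N' \<in> Ns" for N'
  proof -
    obtain N j where N: "N \<in> Ns'"
      and N': "N' = (\<lambda>x. coeff (Q N x ^ (n - k) mod partial_quotient k x) j)"
      using mem unfolding Ns_def by auto
    have "N' x = N' y" if "agree_on (insert n {..<k}) x y" for x y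
      unfolding N' using Q(3)[OF N that] partial_quotient_cong[OF that] by simp
    moreover have "N' \<in> poly_fun (Suc n)"
      unfolding N' by (rule poly_fun_coeff_power_mod_partial_quotient[OF \<open>k < n\<close> Q(1)[OF N]])
    ultimately show ?thesis by blast
  qed
  moreover have "fibre_vanishing G k x \<longleftrightarrow> (\<forall>N'\<in>Ns. N' x = 0)" if x: "x \<in> split_prefix k" for x
  proof -
    have Qx: "\<And>N t. N \<in> Ns' \<Longrightarrow> N (x(k := t)) = poly (Q N x) t" by (rule Q(2))
    have "fibre_vanishing G k x \<longleftrightarrow>
        (\<forall>N\<in>Ns'. \<forall>j<n - k. coeff (Q N x ^ (n - k) mod partial_quotient k x) j = 0)"
      by (rule fibre_vanishing_iff_coeff_power_mod[OF \<open>k < n\<close> x vanish' Qx])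
    also have "\<dots> \<longleftrightarrow> (\<forall>N'\<in>Ns. N' x = 0)" unfolding Ns_def by auto
    finally show ?thesis .
  qed
  ultimately show ?thesis
    unfolding fibre_vanishing_algebraic_def by (intro exI[of _ Ns] conjI ballI) blast+
qed

lemma fibre_vanishing_algebraic_0:
  assumes "G \<in> poly_fun (Suc n)"
  shows "fibre_vanishing_algebraic G 0"
  using le0[of n]
proof (induction rule: inc_induct)
  case base
  show ?case using assms by (rule fibre_vanishing_algebraic_top)
next
  case (step k)
  then show ?case using fibre_vanishing_algebraic_step by blast
qed

text \<open>By elimination, vanishing on a whole fibre is a polynomial condition on the constant term
  alone.\<close>
lemma poly_fun_vanishes_on_lifted_curve:
  assumes G: "G \<in> poly_fun (Suc n)"
    and large: "\<And>y. f - [:y n:] = root_poly n y \<Longrightarrow> M < norm (y n) \<Longrightarrow> G y = 0"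
    and y: "f - [:y n:] = root_poly n y"
  shows "G y = 0"
proof -
  obtain Ns where "\<forall>N\<in>Ns. N \<in> poly_fun (Suc n) \<and>
      (\<forall>x y. agree_on (insert n {..<0}) x y \<longrightarrow> N x = N y)"
    and "\<forall>x\<in>split_prefix 0. fibre_vanishing G 0 x \<longleftrightarrow> (\<forall>N\<in>Ns. N x = 0)"
    using fibre_vanishing_algebraic_0[OF G] unfolding fibre_vanishing_algebraic_def
    by (elim exE conjE)
  then have Ns: "\<And>N. N \<in> Ns \<Longrightarrow> N \<in> poly_fun (Suc n)"
    "\<And>N x y. N \<in> Ns \<Longrightarrow> x n = y n \<Longrightarrow> N x = N y"
    and vanish: "\<And>x. fibre_vanishing G 0 x \<longleftrightarrow> (\<forall>N\<in>Ns. N x = 0)"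
    by (auto simp: agree_on_def)
  have "N x = 0" if N: "N \<in> Ns" for N x
  proof -
    obtain Q where Q: "\<And>x t. N (x(n := t)) = poly (Q x) t"
      using poly_fun_as_poly_in_coordinate[OF Ns(1)[OF N]] by blast
    let ?z = "\<lambda>_. 0 :: complex"
    have "fibre_vanishing G 0 (?z(n := t))" if "M < norm t" for t
      using that large by (auto simp: fibre_vanishing_def split_prefix_top_iff agree_on_def)
    then have "N (?z(n := t)) = 0" if "M < norm t" for t
      using that vanish N by blast
    then have "poly (Q ?z) t = 0" if "M < norm t" for t
      using that Q[of ?z t] by simp
    then have "Q ?z = 0" by (rule poly_eq_0_if_vanishes_near_infinity)
    moreover have "N x = N (?z(n := x n))" by (rule Ns(2)[OF N]) simp
    ultimately show ?thesis using Q by simp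
  qed
  then have "fibre_vanishing G 0 y" using vanish by blast
  moreover have "y \<in> split_prefix n" using y by (simp add: split_prefix_top_iff)
  ultimately show "G y = 0" unfolding fibre_vanishing_def by (auto simp: agree_on_def)
qed

end

section \<open>A holomorphic branch of \<open>f\<^sup>-\<^sup>1(w\<^sup>n)\<close> near infinity\<close>

lemma norm_poly_minus_power_le:
  fixes P :: "complex poly"
  assumes "degree P = n" and "coeff P n = 1" and "1 \<le> norm t"
  shows "norm (poly P t - t ^ n) \<le> (\<Sum>j<n. norm (coeff P j)) * norm t ^ (n - 1)"
proof -
  have "poly P t = (\<Sum>j\<le>n. coeff P j * t ^ j)" using poly_altdef[of P t] assms(1) by simp
  also have "\<dots> = (\<Sum>j<n. coeff P j * t ^ j) + t ^ n"
    using assms(2) by (simp add: lessThan_Suc_atMost[symmetric])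
  finally have "poly P t - t ^ n = (\<Sum>j<n. coeff P j * t ^ j)" by simp
  also have "norm \<dots> \<le> (\<Sum>j<n. norm (coeff P j) * norm t ^ (n - 1))"
  proof (rule order_trans[OF norm_sum sum_mono])
    fix j assume "j \<in> {..<n}"
    then have "norm t ^ j \<le> norm t ^ (n - 1)" using assms(3) by (intro power_increasing) auto
    then show "norm (coeff P j * t ^ j) \<le> norm (coeff P j) * norm t ^ (n - 1)"
      by (simp add: norm_mult norm_power mult_left_mono)
  qed
  finally show ?thesis by (simp add: sum_distrib_right)
qed

context monic_poly
begin

definition tail_bound :: real where "tail_bound = (\<Sum>j<n. norm (coeff f j))"
definition inner_radius :: real where "inner_radius = 4 * tail_bound + 1"
definition shift_bound :: real where "shift_bound = 3 * tail_bound + 1"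
definition outer_radius :: real where "outer_radius = inner_radius + 4 * shift_bound + 1"

definition tail_ratio :: "complex \<Rightarrow> complex" where
  "tail_ratio t = (poly f t - t ^ n) / t ^ n"

text \<open>An \<open>n\<close>-th root of \<open>f\<close> near infinity, \<open>t (f(t) / t\<^sup>n)\<^bsup>1/n\<^esup>\<close>; the principal logarithm
  applies since \<open>f(t) / t\<^sup>n = 1 + tail_ratio t\<close> is close to \<open>1\<close>.\<close>
definition root_near_infinity :: "complex \<Rightarrow> complex" where
  "root_near_infinity t = t * exp (Ln (1 + tail_ratio t) / of_nat n)"

lemma tail_bound_nonneg: "0 \<le> tail_bound"
  unfolding tail_bound_def by (simp add: sum_nonneg)

lemma shift_bound_pos: "0 < shift_bound"
  using tail_bound_nonneg unfolding shift_bound_def by linarith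

lemma norm_tail_ratio:
  assumes t: "inner_radius < norm t"
  shows "norm (tail_ratio t) \<le> tail_bound / norm t" and "norm (tail_ratio t) < 1/4"
proof -
  have t1: "1 \<le> norm t" using t tail_bound_nonneg unfolding inner_radius_def by linarith
  have "norm (tail_ratio t) = norm (poly f t - t ^ n) / norm t ^ n"
    unfolding tail_ratio_def by (simp add: norm_divide norm_power)
  also have "\<dots> \<le> tail_bound * norm t ^ (n - 1) / norm t ^ n"
    using norm_poly_minus_power_le[OF degree_f coeff_f_top t1]
    by (intro divide_right_mono) (simp_all add: tail_bound_def)
  also have "\<dots> = tail_bound / norm t"
  proof -
    have "norm t ^ n = norm t ^ (n - 1) * norm t" using n_pos by (metis Suc_diff_1 power_Suc2)
    then show ?thesis using t1 by simp
  qed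
  finally show bound: "norm (tail_ratio t) \<le> tail_bound / norm t" .
  have "tail_bound / norm t < 1/4"
    using t t1 tail_bound_nonneg unfolding inner_radius_def by (simp add: divide_simps)
  with bound show "norm (tail_ratio t) < 1/4" by linarith
qed

lemma one_plus_tail_ratio_notin_nonpos_Reals:
  assumes "inner_radius < norm t"
  shows "1 + tail_ratio t \<notin> \<real>\<^sub>\<le>\<^sub>0"
proof -
  have "\<bar>Re (tail_ratio t)\<bar> < 1/4" using abs_Re_le_cmod norm_tail_ratio(2)[OF assms] by (rule le_less_trans)
  then have "0 < Re (1 + tail_ratio t)" by simp
  then show ?thesis by (auto simp: complex_nonpos_Reals_iff)
qed

lemma holomorphic_root_near_infinity:
  "root_near_infinity holomorphic_on {t. inner_radius < norm t}"
proof -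
  have "t \<noteq> 0" if "inner_radius < norm t" for t
    using that tail_bound_nonneg unfolding inner_radius_def by auto
  then have "tail_ratio holomorphic_on {t. inner_radius < norm t}"
    unfolding tail_ratio_def by (intro holomorphic_intros) auto
  then show ?thesis
    unfolding root_near_infinity_def using one_plus_tail_ratio_notin_nonpos_Reals n_pos
    by (intro holomorphic_intros) auto
qed

lemma root_near_infinity_power:
  assumes t: "inner_radius < norm t"
  shows "root_near_infinity t ^ n = poly f t"
proof -
  have "t \<noteq> 0" using t tail_bound_nonneg unfolding inner_radius_def by auto
  have "1 + tail_ratio t \<noteq> 0" using one_plus_tail_ratio_notin_nonpos_Reals[OF t] by auto
  have "exp (Ln (1 + tail_ratio t) / of_nat n) ^ n = exp (of_nat n * (Ln (1 + tail_ratio t) / of_nat n))"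
    by (rule exp_of_nat_mult[symmetric])
  also have "\<dots> = 1 + tail_ratio t" using n_pos \<open>1 + tail_ratio t \<noteq> 0\<close> by simp
  finally have "root_near_infinity t ^ n = t ^ n * (1 + tail_ratio t)"
    unfolding root_near_infinity_def by (simp add: power_mult_distrib)
  also have "\<dots> = poly f t" unfolding tail_ratio_def using \<open>t \<noteq> 0\<close> by (simp add: field_simps)
  finally show ?thesis .
qed

lemma norm_root_near_infinity_minus:
  assumes t: "inner_radius < norm t"
  shows "norm (root_near_infinity t - t) \<le> shift_bound"
proof -
  have t0: "0 < norm t" using t tail_bound_nonneg unfolding inner_radius_def by linarith
  define L where "L = Ln (1 + tail_ratio t) / of_nat n"
  have "norm (Ln (1 + tail_ratio t)) \<le> 2 * norm (tail_ratio t)"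
    using norm_tail_ratio(2)[OF t] by (intro norm_Ln_le) simp
  moreover have "norm L \<le> norm (Ln (1 + tail_ratio t))"
    unfolding L_def using n_pos by (simp add: norm_divide divide_le_eq mult_le_cancel_left1)
  ultimately have L: "norm L \<le> 2 * norm (tail_ratio t)" by linarith
  then have "norm (exp L - 1) \<le> 3/2 * norm L"
    using norm_tail_ratio(2)[OF t] by (intro norm_exp_bounds(2)) linarith
  with L have exp_L: "norm (exp L - 1) \<le> 3 * norm (tail_ratio t)" by linarith
  have "norm (root_near_infinity t - t) = norm (t * (exp L - 1))"
    unfolding root_near_infinity_def L_def by (simp add: algebra_simps)
  also have "\<dots> = norm t * norm (exp L - 1)" by (rule norm_mult)
  also have "\<dots> \<le> norm t * (3 * (tail_bound / norm t))"
    using exp_L norm_tail_ratio(1)[OF t] t0 by (intro mult_left_mono) auto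
  also have "\<dots> \<le> shift_bound" using t0 unfolding shift_bound_def by simp
  finally show ?thesis .
qed

text \<open>Cauchy's inequality on a disc of radius \<open>2 * shift_bound\<close>, on which
  \<open>root_near_infinity t - t\<close> is bounded by \<open>shift_bound\<close>.\<close>
lemma norm_deriv_root_near_infinity_minus:
  assumes s: "inner_radius + 3 * shift_bound < norm s"
  shows "norm (deriv (\<lambda>t. root_near_infinity t - t) s) \<le> 1/2"
proof -
  let ?h = "\<lambda>t. root_near_infinity t - t" and ?K = "shift_bound"
  have sub: "cball s (2 * ?K) \<subseteq> {t. inner_radius < norm t}"
  proof
    fix z assume "z \<in> cball s (2 * ?K)"
    then have "norm s \<le> norm z + 2 * ?K" using norm_triangle_ineq2[of s z] by (simp add: dist_norm)
    then show "z \<in> {t. inner_radius < norm t}" using s shift_bound_pos by simp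
  qed
  have hol: "?h holomorphic_on {t. inner_radius < norm t}"
    using holomorphic_root_near_infinity by (intro holomorphic_intros)
  have "norm ((deriv ^^ 1) ?h s) \<le> fact 1 * ?K / (2 * ?K) ^ 1"
  proof (rule Cauchy_inequality)
    show "?h holomorphic_on ball s (2 * ?K)"
      using hol sub ball_subset_cball by (blast intro: holomorphic_on_subset)
    show "continuous_on (cball s (2 * ?K)) ?h"
      using hol sub by (blast intro: holomorphic_on_imp_continuous_on holomorphic_on_subset)
    show "0 < 2 * ?K" using shift_bound_pos by simp
    fix x assume "norm (s - x) = 2 * ?K"
    then have "x \<in> cball s (2 * ?K)" by (simp add: dist_norm)
    then show "norm (?h x) \<le> ?K" using sub norm_root_near_infinity_minus by blast
  qed
  then show ?thesis using shift_bound_pos by simp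
qed

lemma root_near_infinity_inj:
  assumes w: "outer_radius < norm w"
    and t1: "inner_radius < norm t1" "root_near_infinity t1 = w"
    and t2: "inner_radius < norm t2" "root_near_infinity t2 = w"
  shows "t1 = t2"
proof -
  let ?h = "\<lambda>t. root_near_infinity t - t" and ?K = "shift_bound"
  have big: "inner_radius + 3 * ?K < norm s" if "s \<in> cball w ?K" for s
  proof -
    have "norm w \<le> norm s + ?K" using that norm_triangle_ineq2[of w s] by (simp add: dist_norm)
    then show ?thesis using w unfolding outer_radius_def by simp
  qed
  have hol: "?h holomorphic_on {t. inner_radius < norm t}"
    using holomorphic_root_near_infinity by (intro holomorphic_intros)
  have "open {t. inner_radius < norm t}" by (intro open_Collect_less continuous_intros)
  have "t1 \<in> cball w ?K" "t2 \<in> cball w ?K"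
    using norm_root_near_infinity_minus[OF t1(1)] norm_root_near_infinity_minus[OF t2(1)] t1(2) t2(2)
    by (auto simp: dist_norm norm_minus_commute)
  then have "norm (?h t1 - ?h t2) \<le> 1/2 * norm (t1 - t2)"
  proof (intro field_differentiable_bound[where S = "cball w ?K" and f' = "deriv ?h"])
    fix z assume z: "z \<in> cball w ?K"
    then have "z \<in> {t. inner_radius < norm t}" using big shift_bound_pos by force
    then show "(?h has_field_derivative deriv ?h z) (at z within cball w ?K)"
      by (rule holomorphic_derivI[OF hol \<open>open {t. inner_radius < norm t}\<close>])
    show "norm (deriv ?h z) \<le> 1/2" using big[OF z] by (rule norm_deriv_root_near_infinity_minus)
  qed auto
  moreover have "?h t1 - ?h t2 = t2 - t1" using t1 t2 by simp
  ultimately show ?thesis by (simp add: norm_minus_commute)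
qed

text \<open>\<open>s \<mapsto> w - (root_near_infinity s - s)\<close> maps \<open>cball w shift_bound\<close> into itself; by
  Brouwer it has a fixed point, which is a preimage of \<open>w\<close>.\<close>
lemma root_near_infinity_surj:
  assumes w: "outer_radius < norm w"
  shows "\<exists>s. inner_radius < norm s \<and> root_near_infinity s = w"
proof -
  let ?K = "shift_bound"
  have inner: "cball w ?K \<subseteq> {t. inner_radius < norm t}"
  proof
    fix s assume "s \<in> cball w ?K"
    then have "norm w \<le> norm s + ?K" using norm_triangle_ineq2[of w s] by (simp add: dist_norm)
    then show "s \<in> {t. inner_radius < norm t}" using w shift_bound_pos unfolding outer_radius_def by simp
  qed
  have "continuous_on (cball w ?K) root_near_infinity"
    using holomorphic_on_subset[OF holomorphic_root_near_infinity inner]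
    by (rule holomorphic_on_imp_continuous_on)
  then have "continuous_on (cball w ?K) (\<lambda>s. w - (root_near_infinity s - s))"
    by (intro continuous_intros)
  moreover have "(\<lambda>s. w - (root_near_infinity s - s)) \<in> cball w ?K \<rightarrow> cball w ?K"
    using inner norm_root_near_infinity_minus by (auto simp: dist_norm)
  ultimately obtain s where "s \<in> cball w ?K" "w - (root_near_infinity s - s) = s"
    using brouwer_ball[OF shift_bound_pos] by blast
  then show ?thesis using inner by (intro exI[of _ s]) (auto simp: algebra_simps)
qed

lemma root_near_infinity_inverse:
  obtains T where "T holomorphic_on {w. outer_radius < norm w}"
    "\<And>w. outer_radius < norm w \<Longrightarrow> inner_radius < norm (T w) \<and> root_near_infinity (T w) = w"
proof -
  define U where "U = {t. inner_radius < norm t \<and> outer_radius < norm (root_near_infinity t)}"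
  have "continuous_on {t. inner_radius < norm t} root_near_infinity"
    by (rule holomorphic_on_imp_continuous_on[OF holomorphic_root_near_infinity])
  moreover have "open {t::complex. inner_radius < norm t}" "open {w::complex. outer_radius < norm w}"
    by (intro open_Collect_less continuous_intros)+
  ultimately have "open (root_near_infinity -` {w. outer_radius < norm w} \<inter> {t. inner_radius < norm t})"
    using continuous_on_open_vimage by blast
  moreover have "root_near_infinity -` {w. outer_radius < norm w} \<inter> {t. inner_radius < norm t} = U"
    unfolding U_def by auto
  ultimately have "open U" by simp
  have "root_near_infinity holomorphic_on U"
    using holomorphic_root_near_infinity by (rule holomorphic_on_subset) (auto simp: U_def)
  moreover have "inj_on root_near_infinity U"
    by (rule inj_onI) (use root_near_infinity_inj in \<open>auto simp: U_def\<close>)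
  ultimately obtain T where T: "T holomorphic_on root_near_infinity ` U"
    "\<And>z. z \<in> U \<Longrightarrow> T (root_near_infinity z) = z"
    using holomorphic_has_inverse[OF _ \<open>open U\<close>] by metis
  have inverse: "T w \<in> U \<and> root_near_infinity (T w) = w" if w: "outer_radius < norm w" for w
  proof -
    obtain s where "inner_radius < norm s" "root_near_infinity s = w"
      using root_near_infinity_surj[OF w] by blast
    then have "s \<in> U" "T w = s" using w T(2) by (auto simp: U_def)
    then show ?thesis using \<open>root_near_infinity s = w\<close> by simp
  qed
  have "{w. outer_radius < norm w} \<subseteq> root_near_infinity ` U"
  proof
    fix w :: complex assume "w \<in> {w. outer_radius < norm w}"
    then have "T w \<in> U \<and> root_near_infinity (T w) = w" using inverse by blast
    then show "w \<in> root_near_infinity ` U" by (metis image_eqI)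
  qed
  with T(1) have "T holomorphic_on {w. outer_radius < norm w}" by (rule holomorphic_on_subset)
  moreover have "inner_radius < norm (T w) \<and> root_near_infinity (T w) = w"
    if "outer_radius < norm w" for w
    using inverse[OF that] unfolding U_def by blast
  ultimately show ?thesis using that by blast
qed

lemma holomorphic_branch_at_infinity:
  "\<exists>R T. 0 \<le> R \<and> T holomorphic_on {w. R < norm w} \<and> inj_on T {w. R < norm w} \<and>
     (\<forall>w. R < norm w \<longrightarrow> poly f (T w) = w ^ n)"
proof -
  obtain T where hol: "T holomorphic_on {w. outer_radius < norm w}"
    and T: "\<And>w. outer_radius < norm w \<Longrightarrow> inner_radius < norm (T w) \<and> root_near_infinity (T w) = w"
    using root_near_infinity_inverse by blast
  have "inj_on T {w. outer_radius < norm w}"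
  proof (rule inj_onI)
    fix a b assume "a \<in> {w. outer_radius < norm w}" "b \<in> {w. outer_radius < norm w}" "T a = T b"
    then have "root_near_infinity (T a) = a" "root_near_infinity (T b) = b" using T by blast+
    with \<open>T a = T b\<close> show "a = b" by metis
  qed
  moreover have "\<forall>w. outer_radius < norm w \<longrightarrow> poly f (T w) = w ^ n"
  proof safe
    fix w :: complex assume "outer_radius < norm w"
    then have "inner_radius < norm (T w)" and w: "root_near_infinity (T w) = w" using T by blast+
    from root_near_infinity_power[OF this(1)] show "poly f (T w) = w ^ n" unfolding w by simp
  qed
  moreover have "0 \<le> outer_radius"
    using tail_bound_nonneg unfolding outer_radius_def inner_radius_def shift_bound_def by simp
  ultimately show ?thesis using hol by (intro exI[of _ outer_radius] exI[of _ T] conjI)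
qed

end

section \<open>Roots of unity and the rotation of coordinates\<close>

definition unit_root :: "nat \<Rightarrow> complex" where
  "unit_root n = exp (2 * of_real pi * \<i> / of_nat n)"

lemma unit_root_power: "unit_root n ^ j = exp (2 * of_real pi * \<i> * of_nat j / of_nat n)"
proof -
  have "unit_root n ^ j = exp (of_nat j * (2 * of_real pi * \<i> / of_nat n))"
    unfolding unit_root_def by (rule exp_of_nat_mult[symmetric])
  also have "of_nat j * (2 * of_real pi * \<i> / of_nat n) = 2 * of_real pi * \<i> * of_nat j / of_nat n"
    by simp
  finally show ?thesis .
qed

lemma norm_unit_root_power_mult: "norm (unit_root n ^ j * w) = norm w"
proof -
  have "norm (unit_root n) = 1" unfolding unit_root_def norm_exp_eq_Re by simp
  then show ?thesis by (simp add: norm_mult norm_power)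
qed

lemma unit_root_power_self: "0 < n \<Longrightarrow> unit_root n ^ n = 1"
  using complex_root_unity[of n 1] unfolding unit_root_power by simp

lemma unit_root_power_mod: "0 < n \<Longrightarrow> unit_root n ^ (i mod n) = unit_root n ^ i"
  unfolding unit_root_power by (simp add: complex_root_unity_eq)

lemma unit_root_power_eq_iff:
  "i < n \<Longrightarrow> j < n \<Longrightarrow> unit_root n ^ i = unit_root n ^ j \<longleftrightarrow> i = j"
  unfolding unit_root_power by (simp add: complex_root_unity_eq)

definition rotation :: "nat \<Rightarrow> nat \<Rightarrow> nat" where
  "rotation n = cycle_of_list [0..<n]"

lemma rotation_permutes: "rotation n permutes {..<n}"
proof -
  have "cycle_of_list [0..<n] permutes set [0..<n]" by (rule cycle_permutes)
  then show ?thesis unfolding rotation_def by (simp add: lessThan_atLeast0)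
qed

lemma rotation_apply: "i < n \<Longrightarrow> rotation n i = Suc i mod n"
proof -
  assume i: "i < n"
  have "distinct [0..<n]" by simp
  then have "map (rotation n) [0..<n] = rotate1 [0..<n]"
    unfolding rotation_def using cyclic_rotation[of "[0..<n]" 1] by simp
  then have "map (rotation n) [0..<n] ! i = rotate1 [0..<n] ! i" by simp
  then show ?thesis using i by (simp add: nth_rotate1)
qed

lemma is_full_cycle_conjugate_rotation:
  assumes \<sigma>: "\<sigma> permutes {..<n}"
  shows "is_full_cycle n (inv \<sigma> \<circ> rotation n \<circ> \<sigma>)"
proof -
  have \<sigma>': "inv \<sigma> permutes {..<n}" by (rule permutes_inv[OF \<sigma>])
  let ?cs = "map (inv \<sigma>) [0..<n]"
  have "inv \<sigma> \<circ> cycle_of_list [0..<n] \<circ> inv (inv \<sigma>) = cycle_of_list ?cs"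
    by (rule conjugation_of_cycle) (simp_all add: permutes_bij[OF \<sigma>'])
  then have eq: "inv \<sigma> \<circ> rotation n \<circ> \<sigma> = cycle_of_list ?cs"
    unfolding rotation_def permutes_inv_inv[OF \<sigma>] .
  have "distinct ?cs"
    using permutes_inj[OF \<sigma>'] by (simp add: distinct_map inj_on_subset[of _ UNIV])
  moreover have "set ?cs = {..<n}"
    using permutes_image[OF \<sigma>'] by (simp add: lessThan_atLeast0)
  moreover have "cycle_of_list ?cs permutes set ?cs" by (rule cycle_permutes)
  ultimately show ?thesis unfolding is_full_cycle_def eq by auto
qed

lemma root_poly_eq_imp_permutation:
  assumes eq: "root_poly n x = root_poly n z" and inj: "inj_on z {..<n}"
  obtains \<sigma> where "\<sigma> permutes {..<n}" "\<And>i. i < n \<Longrightarrow> x i = z (\<sigma> i)"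
proof -
  have "x ` {..<n} = {t. poly (root_poly n x) t = 0}" using poly_root_poly_eq_0_iff by blast
  also have "\<dots> = z ` {..<n}" unfolding eq using poly_root_poly_eq_0_iff by blast
  finally have im: "x ` {..<n} = z ` {..<n}" .
  define \<sigma> where "\<sigma> i = (if i < n then inv_into {..<n} z (x i) else i)" for i
  have \<sigma>_less: "\<sigma> i < n" and z_\<sigma>: "z (\<sigma> i) = x i" if "i < n" for i
  proof -
    have xi: "x i \<in> z ` {..<n}" using im that by blast
    show "\<sigma> i < n" "z (\<sigma> i) = x i"
      unfolding \<sigma>_def using that inv_into_into[OF xi] f_inv_into_f[OF xi] by auto
  qed
  have "card (x ` {..<n}) = card {..<n}" using im card_image[OF inj] by simp
  then have inj_x: "inj_on x {..<n}" by (rule eq_card_imp_inj_on[rotated]) simp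
  have "inj_on \<sigma> {..<n}"
  proof (rule inj_onI)
    fix i j assume "i \<in> {..<n}" "j \<in> {..<n}" "\<sigma> i = \<sigma> j"
    then have "x i = x j" using z_\<sigma> by (metis lessThan_iff)
    with inj_x show "i = j" using \<open>i \<in> {..<n}\<close> \<open>j \<in> {..<n}\<close> by (simp add: inj_on_def)
  qed
  moreover have "\<sigma> ` {..<n} \<subseteq> {..<n}" using \<sigma>_less by auto
  ultimately have "\<sigma> ` {..<n} = {..<n}" by (intro endo_inj_surj) auto
  with \<open>inj_on \<sigma> {..<n}\<close> have "bij_betw \<sigma> {..<n} {..<n}" by (simp add: bij_betw_def)
  then have "\<sigma> permutes {..<n}" by (rule bij_imp_permutes) (simp add: \<sigma>_def)
  with z_\<sigma> show ?thesis using that by metis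
qed

lemma inv_conjugate:
  assumes "bij \<sigma>" "bij \<rho>"
  shows "inv (inv \<sigma> \<circ> \<rho> \<circ> \<sigma>) = inv \<sigma> \<circ> inv \<rho> \<circ> \<sigma>"
proof -
  have "bij (inv \<sigma> \<circ> \<rho>)" using assms by (simp add: bij_comp bij_imp_bij_inv)
  then have "inv (inv \<sigma> \<circ> \<rho> \<circ> \<sigma>) = inv \<sigma> \<circ> inv (inv \<sigma> \<circ> \<rho>)"
    using assms(1) by (rule o_inv_distrib)
  moreover have "inv (inv \<sigma> \<circ> \<rho>) = inv \<rho> \<circ> \<sigma>"
    using assms by (simp add: o_inv_distrib bij_imp_bij_inv inv_inv_eq)
  ultimately show ?thesis by (simp add: comp_assoc)
qed

section \<open>The branch components of the curve\<close>

lemma connected_outside_cball: "connected {w::complex. R < norm w}"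
proof -
  have "{w::complex. R < norm w} = - cball 0 R" by (auto simp: dist_norm)
  moreover have "connected (- cball (0::complex) R)"
    by (rule connected_complement_bounded_convex) auto
  ultimately show ?thesis by simp
qed

locale branch_at_infinity = monic_poly +
  fixes R :: real and T :: "complex \<Rightarrow> complex"
  assumes R_nonneg: "0 \<le> R"
    and holomorphic_T: "T holomorphic_on {w. R < norm w}"
    and inj_T: "inj_on T {w. R < norm w}"
    and T_root: "R < norm w \<Longrightarrow> poly f (T w) = w ^ n"
begin

definition branch_point :: "complex \<Rightarrow> nat \<Rightarrow> complex" where
  "branch_point w = (\<lambda>i. if i < n then T (unit_root n ^ i * w) else 0)"

definition branch_component :: "(nat \<Rightarrow> nat) \<Rightarrow> (nat \<Rightarrow> complex) set" where
  "branch_component \<sigma> = zariski_closure n ((\<lambda>w. branch_point w \<circ> \<sigma>) ` {w. R < norm w})"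

lemma inj_on_branch_point:
  assumes w: "R < norm w"
  shows "inj_on (branch_point w) {..<n}"
proof (rule inj_onI)
  fix i j assume "i \<in> {..<n}" "j \<in> {..<n}" "branch_point w i = branch_point w j"
  then have "T (unit_root n ^ i * w) = T (unit_root n ^ j * w)" by (simp add: branch_point_def)
  moreover have "unit_root n ^ i * w \<in> {w. R < norm w}" "unit_root n ^ j * w \<in> {w. R < norm w}"
    using w by (simp_all add: norm_unit_root_power_mult)
  ultimately have "unit_root n ^ i * w = unit_root n ^ j * w" using inj_T by (auto dest: inj_onD)
  moreover have "w \<noteq> 0" using w R_nonneg by auto
  ultimately show "i = j" using \<open>i \<in> {..<n}\<close> \<open>j \<in> {..<n}\<close> by (simp add: unit_root_power_eq_iff)
qed

lemma branch_point_root_poly: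
  assumes w: "R < norm w"
  shows "f - [:w ^ n:] = root_poly n (branch_point w)"
proof (rule monic_eq_root_poly[OF degree_f_minus_const coeff_f_minus_const_top inj_on_branch_point[OF w]])
  fix i assume "i < n"
  have "poly f (T (unit_root n ^ i * w)) = (unit_root n ^ i * w) ^ n"
    using w by (intro T_root) (simp add: norm_unit_root_power_mult)
  also have "\<dots> = (unit_root n ^ n) ^ i * w ^ n"
    by (simp add: power_mult_distrib flip: power_mult) (simp add: mult.commute)
  also have "\<dots> = w ^ n" using unit_root_power_self[OF n_pos] by simp
  finally show "poly (f - [:w ^ n:]) (branch_point w i) = 0"
    using \<open>i < n\<close> by (simp add: branch_point_def)
qed

lemma branch_point_rotate: "branch_point (unit_root n * w) = branch_point w \<circ> rotation n"
proof
  fix i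
  show "branch_point (unit_root n * w) i = (branch_point w \<circ> rotation n) i"
  proof (cases "i < n")
    case True
    then have "unit_root n ^ (Suc i mod n) = unit_root n ^ Suc i" "Suc i mod n < n"
      using unit_root_power_mod[OF n_pos] n_pos by simp_all
    then show ?thesis
      using True by (simp add: branch_point_def rotation_apply mult.assoc mult.left_commute)
  next
    case False
    then show ?thesis
      using permutes_not_in[OF rotation_permutes, of i] by (simp add: branch_point_def)
  qed
qed

lemma holomorphic_branch_point: "(\<lambda>w. branch_point w i) holomorphic_on {w. R < norm w}"
proof (cases "i < n")
  case True
  have "(T \<circ> (\<lambda>w. unit_root n ^ i * w)) holomorphic_on {w. R < norm w}"
    by (rule holomorphic_on_compose_gen[OF _ holomorphic_T])
      (auto intro: holomorphic_intros simp: norm_unit_root_power_mult)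
  then show ?thesis using True by (simp add: branch_point_def o_def)
qed (simp add: branch_point_def)

lemma branch_point_comp_aspace: "\<sigma> permutes {..<n} \<Longrightarrow> branch_point w \<circ> \<sigma> \<in> aspace n"
  unfolding aspace_def branch_point_def using permutes_not_in[of \<sigma> "{..<n}"] by auto

lemma zariski_irreducible_branch_component:
  assumes "\<sigma> permutes {..<n}"
  shows "zariski_irreducible n (branch_component \<sigma>)"
  unfolding branch_component_def
proof (rule zariski_irreducible_closure_holomorphic_image)
  show "open {w::complex. R < norm w}" by (intro open_Collect_less continuous_intros)
  show "connected {w::complex. R < norm w}" by (rule connected_outside_cball)
  have "R < norm (complex_of_real (\<bar>R\<bar> + 1))" by simp
  then show "{w::complex. R < norm w} \<noteq> {}" by blast
  show "(\<lambda>w. (branch_point w \<circ> \<sigma>) i) holomorphic_on {w. R < norm w}" for i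
    using holomorphic_branch_point[of "\<sigma> i"] by simp
  show "(\<lambda>w. branch_point w \<circ> \<sigma>) ` {w. R < norm w} \<subseteq> aspace n"
    using branch_point_comp_aspace[OF assms] by auto
qed

lemma branch_component_subset_elem_sym_curve:
  assumes f: "f = root_poly n c" and \<sigma>: "\<sigma> permutes {..<n}"
  shows "branch_component \<sigma> \<subseteq> elem_sym_curve n c"
  unfolding branch_component_def
proof (rule zariski_closure_minimal[OF zariski_closed_elem_sym_curve], rule image_subsetI)
  fix w :: complex assume "w \<in> {w. R < norm w}"
  then have "root_poly n (branch_point w \<circ> \<sigma>) = root_poly n c - [:w ^ n:]"
    using branch_point_root_poly root_poly_permute[OF \<sigma>] f by simp
  then show "branch_point w \<circ> \<sigma> \<in> elem_sym_curve n c"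
    using branch_point_comp_aspace[OF \<sigma>] elem_sym_curve_iff by blast
qed

lemma perm_pt_branch_point:
  assumes \<sigma>: "\<sigma> permutes {..<n}"
  shows "perm_pt (inv \<sigma> \<circ> rotation n \<circ> \<sigma>) (branch_point w \<circ> \<sigma>) = branch_point (w / unit_root n) \<circ> \<sigma>"
proof -
  have "unit_root n \<noteq> 0" by (simp add: unit_root_def)
  then have shift: "branch_point w = branch_point (w / unit_root n) \<circ> rotation n"
    using branch_point_rotate[of "w / unit_root n"] by simp
  have "perm_pt (inv \<sigma> \<circ> rotation n \<circ> \<sigma>) (branch_point w \<circ> \<sigma>) =
      branch_point w \<circ> (\<sigma> \<circ> inv \<sigma>) \<circ> inv (rotation n) \<circ> \<sigma>"
    unfolding perm_pt_def inv_conjugate[OF permutes_bij[OF \<sigma>] permutes_bij[OF rotation_permutes]]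
    by (simp add: comp_assoc)
  also have "\<dots> = branch_point (w / unit_root n) \<circ> (rotation n \<circ> inv (rotation n)) \<circ> \<sigma>"
    unfolding shift permutes_inv_o(1)[OF \<sigma>] by (simp add: comp_assoc)
  also have "\<dots> = branch_point (w / unit_root n) \<circ> \<sigma>"
    unfolding permutes_inv_o(1)[OF rotation_permutes] by simp
  finally show ?thesis .
qed

lemma perm_pt_branch_component:
  assumes \<sigma>: "\<sigma> permutes {..<n}"
  shows "perm_pt (inv \<sigma> \<circ> rotation n \<circ> \<sigma>) ` branch_component \<sigma> = branch_component \<sigma>"
  unfolding branch_component_def
proof (rule zariski_closure_perm_pt_eq)
  show "inv \<sigma> \<circ> rotation n \<circ> \<sigma> permutes {..<n}"
    by (intro permutes_compose[OF \<sigma>] permutes_compose[OF rotation_permutes permutes_inv[OF \<sigma>]])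
  have \<zeta>: "unit_root n \<noteq> 0" "norm (unit_root n) = 1"
    using norm_unit_root_power_mult[of n 1 1] by (auto simp: unit_root_def)
  have D: "(\<lambda>w. w / unit_root n) ` {w. R < norm w} = {w. R < norm w}"
  proof (intro equalityI subsetI)
    fix w assume "w \<in> (\<lambda>w. w / unit_root n) ` {w. R < norm w}"
    then show "w \<in> {w. R < norm w}" using \<zeta> by (auto simp: norm_divide)
  next
    fix w :: complex assume "w \<in> {w. R < norm w}"
    then have "unit_root n * w \<in> {w. R < norm w}" "w = unit_root n * w / unit_root n"
      using \<zeta> by (simp_all add: norm_mult)
    then show "w \<in> (\<lambda>w. w / unit_root n) ` {w. R < norm w}" by (rule rev_image_eqI)
  qed
  have "perm_pt (inv \<sigma> \<circ> rotation n \<circ> \<sigma>) ` (\<lambda>w. branch_point w \<circ> \<sigma>) ` {w. R < norm w} =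
      (\<lambda>w. branch_point w \<circ> \<sigma>) ` (\<lambda>w. w / unit_root n) ` {w. R < norm w}"
    by (simp add: image_image perm_pt_branch_point[OF \<sigma>])
  then show "perm_pt (inv \<sigma> \<circ> rotation n \<circ> \<sigma>) ` (\<lambda>w. branch_point w \<circ> \<sigma>) ` {w. R < norm w} =
      (\<lambda>w. branch_point w \<circ> \<sigma>) ` {w. R < norm w}"
    unfolding D .
qed

lemma lifted_point_eq_branch_point:
  assumes y: "f - [:y n:] = root_poly n y" and big: "R ^ n < norm (y n)"
  obtains \<sigma> w where "\<sigma> permutes {..<n}" "R < norm w" "\<And>i. i < n \<Longrightarrow> y i = branch_point w (\<sigma> i)"
proof -
  have "y n \<noteq> 0" using big R_nonneg by (metis norm_zero not_less zero_le_power)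
  define w where "w = exp (Ln (y n) / of_nat n)"
  have "w ^ n = exp (of_nat n * (Ln (y n) / of_nat n))"
    unfolding w_def by (rule exp_of_nat_mult[symmetric])
  also have "\<dots> = y n" using n_pos \<open>y n \<noteq> 0\<close> by simp
  finally have wn: "w ^ n = y n" .
  have w: "R < norm w"
  proof (rule power_less_imp_less_base)
    show "R ^ n < norm w ^ n" using big wn by (simp flip: norm_power)
  qed simp
  have "root_poly n y = f - [:w ^ n:]" using y wn by simp
  also have "\<dots> = root_poly n (branch_point w)" by (rule branch_point_root_poly[OF w])
  finally obtain \<sigma> where "\<sigma> permutes {..<n}" "\<And>i. i < n \<Longrightarrow> y i = branch_point w (\<sigma> i)"
    using root_poly_eq_imp_permutation inj_on_branch_point[OF w] by blast
  with w show ?thesis using that by blast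
qed

text \<open>The points of the curve with large constant term lie on branches; elimination along the
  lifted curve takes care of the rest.\<close>
lemma poly_fun_vanishes_on_elem_sym_curve:
  assumes f: "f = root_poly n c" and G: "G \<in> poly_fun n"
    and branches: "\<And>\<sigma> w. \<sigma> permutes {..<n} \<Longrightarrow> R < norm w \<Longrightarrow> G (branch_point w \<circ> \<sigma>) = 0"
    and x: "x \<in> elem_sym_curve n c"
  shows "G x = 0"
proof -
  obtain m where m: "root_poly n x = root_poly n c - [:m:]" using x elem_sym_curve_iff by blast
  define y where "y = x(n := m)"
  have "root_poly n y = root_poly n x" unfolding y_def by (rule root_poly_cong) simp
  then have y_lifted: "f - [:y n:] = root_poly n y" using m f by (simp add: y_def)
  have large: "G z = 0" if z: "f - [:z n:] = root_poly n z" and big: "R ^ n < norm (z n)" for z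
  proof -
    obtain \<sigma> w where \<sigma>: "\<sigma> permutes {..<n}" and w: "R < norm w"
      and z_eq: "\<And>i. i < n \<Longrightarrow> z i = branch_point w (\<sigma> i)"
      using lifted_point_eq_branch_point[OF z big] by blast
    have "G z = G (branch_point w \<circ> \<sigma>)" by (rule poly_fun_cong[OF G]) (simp add: z_eq)
    also have "\<dots> = 0" by (rule branches[OF \<sigma> w])
    finally show ?thesis .
  qed
  have "G x = G y" by (rule poly_fun_cong[OF G]) (simp add: y_def)
  also have "G y = 0"
    using poly_fun_vanishes_on_lifted_curve[where M = "R ^ n", OF poly_fun_mono[OF G] large y_lifted]
    by simp
  finally show ?thesis .
qed

lemma elem_sym_curve_subset_branch_components:
  assumes f: "f = root_poly n c"
  shows "elem_sym_curve n c \<subseteq> (\<Union>\<sigma>\<in>{\<sigma>. \<sigma> permutes {..<n}}. branch_component \<sigma>)"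
proof (rule subsetI, rule ccontr)
  let ?P = "{\<sigma>. \<sigma> permutes {..<n}}"
  fix x assume x: "x \<in> elem_sym_curve n c" and outside: "x \<notin> (\<Union>\<sigma>\<in>?P. branch_component \<sigma>)"
  have "\<exists>g. g \<in> poly_fun n \<and> (\<forall>w. R < norm w \<longrightarrow> g (branch_point w \<circ> \<sigma>) = 0) \<and> g x \<noteq> 0"
    if \<sigma>: "\<sigma> \<in> ?P" for \<sigma>
  proof -
    have "x \<notin> branch_component \<sigma>" using \<sigma> outside by blast
    moreover have "x \<in> aspace n" using x unfolding elem_sym_curve_def by blast
    ultimately obtain g where "g \<in> poly_fun n" "\<forall>y\<in>(\<lambda>w. branch_point w \<circ> \<sigma>) ` {w. R < norm w}. g y = 0"
      "g x \<noteq> 0"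
      unfolding branch_component_def zariski_closure_def by blast
    then show ?thesis by auto
  qed
  then have "\<exists>g. \<forall>\<sigma>\<in>?P. g \<sigma> \<in> poly_fun n \<and>
      (\<forall>w. R < norm w \<longrightarrow> g \<sigma> (branch_point w \<circ> \<sigma>) = 0) \<and> g \<sigma> x \<noteq> 0"
    by (intro bchoice ballI)
  then obtain g where g: "\<forall>\<sigma>\<in>?P. g \<sigma> \<in> poly_fun n \<and>
      (\<forall>w. R < norm w \<longrightarrow> g \<sigma> (branch_point w \<circ> \<sigma>) = 0) \<and> g \<sigma> x \<noteq> 0"
    by blast
  have fin: "finite ?P" by (rule finite_permutations) simp
  have "(\<lambda>y. \<Prod>\<sigma>\<in>?P. g \<sigma> y) x = 0"
  proof (rule poly_fun_vanishes_on_elem_sym_curve[OF f _ _ x])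
    show "(\<lambda>y. \<Prod>\<sigma>\<in>?P. g \<sigma> y) \<in> poly_fun n" using fin g by (intro poly_fun_prod) auto
    fix \<sigma> and w :: complex assume "\<sigma> permutes {..<n}" "R < norm w"
    then show "(\<Prod>\<tau>\<in>?P. g \<tau> (branch_point w \<circ> \<sigma>)) = 0" using fin g by (auto simp: prod_zero_iff)
  qed
  moreover have "(\<Prod>\<sigma>\<in>?P. g \<sigma> x) \<noteq> 0" using fin g by (simp add: prod_zero_iff)
  ultimately show False by simp
qed

lemma irreducible_component_eq_branch_component:
  assumes f: "f = root_poly n c" and Z: "irreducible_component n (elem_sym_curve n c) Z"
  obtains \<sigma> where "\<sigma> permutes {..<n}" "Z = branch_component \<sigma>"
proof -
  have Z_irr: "zariski_irreducible n Z" and Z_sub: "Z \<subseteq> elem_sym_curve n c"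
    and Z_max: "\<And>W. zariski_irreducible n W \<Longrightarrow> Z \<subseteq> W \<Longrightarrow> W \<subseteq> elem_sym_curve n c \<Longrightarrow> W = Z"
    using Z unfolding irreducible_component_def by blast+
  have "\<exists>\<sigma>\<in>{\<sigma>. \<sigma> permutes {..<n}}. Z \<subseteq> branch_component \<sigma>"
  proof (rule zariski_irreducible_subset_UN[OF Z_irr])
    show "finite {\<sigma>. \<sigma> permutes {..<n}}" by (rule finite_permutations) simp
    show "zariski_closed n (branch_component \<sigma>)" for \<sigma>
      unfolding branch_component_def by (rule zariski_closed_closure)
    show "Z \<subseteq> (\<Union>\<sigma>\<in>{\<sigma>. \<sigma> permutes {..<n}}. branch_component \<sigma>)"
      using Z_sub elem_sym_curve_subset_branch_components[OF f] by blast
  qed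
  then obtain \<sigma> where \<sigma>: "\<sigma> permutes {..<n}" and "Z \<subseteq> branch_component \<sigma>" by blast
  then have "branch_component \<sigma> = Z"
    by (intro Z_max zariski_irreducible_branch_component[OF \<sigma>]
        branch_component_subset_elem_sym_curve[OF f \<sigma>])
  with \<sigma> show ?thesis using that by blast
qed

end

theorem lemma3p4:
  fixes p :: nat and v :: "nat \<Rightarrow> real" and Z :: "(nat \<Rightarrow> complex) set"
  assumes "prime p"
    and "inj_on v {..<p}"
    and "irreducible_component p (elem_sym_curve p (\<lambda>i. complex_of_real (v i))) Z"
  shows "\<exists>\<sigma>. is_full_cycle p \<sigma> \<and> perm_pt \<sigma> ` Z = Z"
proof -
  let ?f = "root_poly p (\<lambda>i. complex_of_real (v i))"
  have "0 < p" using assms(1) by (rule prime_gt_0_nat)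
  then have monic: "monic_poly ?f p"
    by unfold_locales (simp_all add: degree_root_poly coeff_root_poly_top)
  then obtain R T where "0 \<le> R" "T holomorphic_on {w. R < norm w}" "inj_on T {w. R < norm w}"
    "\<forall>w. R < norm w \<longrightarrow> poly ?f (T w) = w ^ p"
    using monic_poly.holomorphic_branch_at_infinity by blast
  with monic have "branch_at_infinity ?f p R T"
    unfolding branch_at_infinity_def branch_at_infinity_axioms_def by blast
  then obtain \<sigma> where \<sigma>: "\<sigma> permutes {..<p}" and Z: "Z = branch_at_infinity.branch_component p R T \<sigma>"
    using branch_at_infinity.irreducible_component_eq_branch_component[OF _ refl assms(3)] by blast
  show ?thesis
    using is_full_cycle_conjugate_rotation[OF \<sigma>]
      branch_at_infinity.perm_pt_branch_component[OF \<open>branch_at_infinity ?f p R T\<close> \<sigma>] Z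
    by blast
qed

end
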